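(* Let $X$ be a continuous dcpo (with its Scott topology). Then $\mathbb{P}_{\mathsf{AP}}(X)$ (resp. $\mathbb{P}^{\le 1}_{\mathsf{AP}}(X)$), ordered pointwise, is a continuous dcpo, with a basis consisting of the maps $h\mapsto\max_{i=1}^m\sum_{j=1}^{n_i}a_{ij}h(x_{ij})$ with $m\ge1$, $a_{ij}\in\mathbb{R}_+$, $x_{ij}\in X$ (resp., additionally with $\sum_{j=1}^{n_i}a_{ij}\le1$ for every $i$). If $X$ is a pointed continuous dcpo with least element $\bot$, then $\mathbb{P}^1_{\mathsf{AP}}(X)$ is a pointed continuous dcpo, with a basis given by such maps with $\sum_{j=1}^{n_i}a_{ij}=1$ for every $i$, and its least element is $h\mapsto h(\bot)$.
   Context: $\overline{\mathbb{R}}_+=[0,+\infty]$ with the Scott topology. $\mathcal{L}X$: Scott-continuous maps $X\to\overline{\mathbb{R}}_+$ ordered pointwise; $\mathbf 1$ constant map $1$. A Hoare prevision on $X$ is a Scott-continuous map $F:\mathcal{L}X\to\overline{\mathbb{R}}_+$ (for the Scott topology on $\mathcal LX$) that is positively homogeneous ($F(ah)=aF(h)$, $a\in\mathbb{R}_+$) and sublinear ($F(h+h')\le F(h)+F(h')$). It is subnormalized if $F(\mathbf 1+h)\le1+F(h)$ for all $h$, normalized if equality. $\mathbb{P}_{\mathsf{AP}}(X)$, $\mathbb{P}^{\le1}_{\mathsf{AP}}(X)$, $\mathbb{P}^{1}_{\mathsf{AP}}(X)$: all / subnormalized / normalized Hoare previsions, ordered pointwise. A basis of a continuous dcpo $D$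 is a subset $B$ such that every element is the directed supremum of the elements of $B$ way-below it. *)

theory Defs
  imports Main "HOL-Library.Extended_Nonnegative_Real"
begin

definition directed_on :: "'a set \<Rightarrow> ('a \<Rightarrow> 'a \<Rightarrow> bool) \<Rightarrow> 'a set \<Rightarrow> bool" where
  "directed_on D le S \<longleftrightarrow> S \<subseteq> D \<and> S \<noteq> {} \<and> (\<forall>x\<in>S. \<forall>y\<in>S. \<exists>z\<in>S. le x z \<and> le y z)"

definition is_lub_on :: "'a set \<Rightarrow> ('a \<Rightarrow> 'a \<Rightarrow> bool) \<Rightarrow> 'a set \<Rightarrow> 'a \<Rightarrow> bool" where
  "is_lub_on D le S u \<longleftrightarrow> u \<in> D \<and> (\<forall>x\<in>S. le x u) \<and> (\<forall>v\<in>D. (\<forall>x\<in>S. le x v) \<longrightarrow> le u v)"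

definition partial_order_on_rel :: "'a set \<Rightarrow> ('a \<Rightarrow> 'a \<Rightarrow> bool) \<Rightarrow> bool" where
  "partial_order_on_rel D le \<longleftrightarrow>
     (\<forall>x\<in>D. le x x) \<and>
     (\<forall>x\<in>D. \<forall>y\<in>D. le x y \<and> le y x \<longrightarrow> x = y) \<and>
     (\<forall>x\<in>D. \<forall>y\<in>D. \<forall>z\<in>D. le x y \<and> le y z \<longrightarrow> le x z)"

definition dcpo_on :: "'a set \<Rightarrow> ('a \<Rightarrow> 'a \<Rightarrow> bool) \<Rightarrow> bool" where
  "dcpo_on D le \<longleftrightarrow> partial_order_on_rel D le \<and>
     (\<forall>S. directed_on D le S \<longrightarrow> (\<exists>u. is_lub_on D le S u))"

definition way_below_on :: "'a set \<Rightarrow> ('a \<Rightarrow> 'a \<Rightarrow> bool) \<Rightarrow> 'a \<Rightarrow> 'a \<Rightarrow> bool" where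
  "way_below_on D le x y \<longleftrightarrow> x \<in> D \<and> y \<in> D \<and>
     (\<forall>S u. directed_on D le S \<and> is_lub_on D le S u \<and> le y u \<longrightarrow> (\<exists>s\<in>S. le x s))"

definition basis_on :: "'a set \<Rightarrow> ('a \<Rightarrow> 'a \<Rightarrow> bool) \<Rightarrow> 'a set \<Rightarrow> bool" where
  "basis_on D le B \<longleftrightarrow> B \<subseteq> D \<and>
     (\<forall>x\<in>D. directed_on D le {b\<in>B. way_below_on D le b x} \<and>
             is_lub_on D le {b\<in>B. way_below_on D le b x} x)"

definition continuous_dcpo_on :: "'a set \<Rightarrow> ('a \<Rightarrow> 'a \<Rightarrow> bool) \<Rightarrow> bool" where
  "continuous_dcpo_on D le \<longleftrightarrow> dcpo_on D le \<and> basis_on D le D"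

text \<open>Scott-continuous maps from a dcpo into [0,\<infinity>] (= ennreal): monotone maps preserving
  suprema of directed sets (equivalently, continuous for the Scott topologies).\<close>
definition scott_cont_on :: "'a set \<Rightarrow> ('a \<Rightarrow> 'a \<Rightarrow> bool) \<Rightarrow> ('a \<Rightarrow> ennreal) \<Rightarrow> bool" where
  "scott_cont_on D le f \<longleftrightarrow>
     (\<forall>x\<in>D. \<forall>y\<in>D. le x y \<longrightarrow> f x \<le> f y) \<and>
     (\<forall>S u. directed_on D le S \<and> is_lub_on D le S u \<longrightarrow> f u = (SUP s\<in>S. f s))"

definition LX :: "('a::order \<Rightarrow> ennreal) set" where
  "LX = {h. scott_cont_on UNIV (\<le>) h}"

text \<open>Previsions are functions on all of 'a => ennreal; we make them extensional
  (value 0 outside LX) so that the pointwise order on LX is antisymmetric.\<close>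
definition hoare_prev :: "(('a::order \<Rightarrow> ennreal) \<Rightarrow> ennreal) set" where
  "hoare_prev = {F.
     scott_cont_on LX (\<le>) F \<and>
     (\<forall>h\<in>LX. \<forall>a::ennreal. a \<noteq> \<infinity> \<longrightarrow> F (\<lambda>x. a * h x) = a * F h) \<and>
     (\<forall>h\<in>LX. \<forall>h'\<in>LX. F (\<lambda>x. h x + h' x) \<le> F h + F h') \<and>
     (\<forall>h. h \<notin> LX \<longrightarrow> F h = 0)}"

definition hoare_prev_sub :: "(('a::order \<Rightarrow> ennreal) \<Rightarrow> ennreal) set" where
  "hoare_prev_sub = {F \<in> hoare_prev. \<forall>h\<in>LX. F (\<lambda>x. 1 + h x) \<le> 1 + F h}"

definition hoare_prev_norm :: "(('a::order \<Rightarrow> ennreal) \<Rightarrow> ennreal) set" where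
  "hoare_prev_norm = {F \<in> hoare_prev. \<forall>h\<in>LX. F (\<lambda>x. 1 + h x) = 1 + F h}"

definition prev_le :: "(('a::order \<Rightarrow> ennreal) \<Rightarrow> ennreal) \<Rightarrow> (('a \<Rightarrow> ennreal) \<Rightarrow> ennreal) \<Rightarrow> bool" where
  "prev_le F G \<longleftrightarrow> (\<forall>h\<in>LX. F h \<le> G h)"

text \<open>The map h \<mapsto> max_i sum_j a_ij h(x_ij); row i is the list of pairs (a_ij, x_ij).\<close>
definition simple_hoare :: "(ennreal \<times> 'a::order) list list \<Rightarrow> ('a \<Rightarrow> ennreal) \<Rightarrow> ennreal" where
  "simple_hoare rows = (\<lambda>h. if h \<in> LX
      then Max (set (map (\<lambda>row. \<Sum>(a, x)\<leftarrow>row. a * h x) rows)) else 0)"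

definition finite_coeffs :: "(ennreal \<times> 'a) list list \<Rightarrow> bool" where
  "finite_coeffs rows \<longleftrightarrow> rows \<noteq> [] \<and> (\<forall>row\<in>set rows. \<forall>(a, x)\<in>set row. a \<noteq> \<infinity>)"

definition simple_basis :: "(('a::order \<Rightarrow> ennreal) \<Rightarrow> ennreal) set" where
  "simple_basis = {simple_hoare rows | rows. finite_coeffs rows}"

definition simple_basis_sub :: "(('a::order \<Rightarrow> ennreal) \<Rightarrow> ennreal) set" where
  "simple_basis_sub = {simple_hoare rows | rows. finite_coeffs rows \<and>
      (\<forall>row\<in>set rows. (\<Sum>(a, x)\<leftarrow>row. a) \<le> 1)}"

definition simple_basis_norm :: "(('a::order \<Rightarrow> ennreal) \<Rightarrow> ennreal) set" where
  "simple_basis_norm = {simple_hoare rows | rows. finite_coeffs rows \<and>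
      (\<forall>row\<in>set rows. (\<Sum>(a, x)\<leftarrow>row. a) = 1)}"

end

theory Submission
  imports Defs "HOL-Library.FuncSet"
begin

lemma way_below_on_imp_le:
  assumes po: "partial_order_on_rel D le" and wb: "way_below_on D le x y"
  shows "le x y"
proof -
  have y: "y \<in> D" and yy: "le y y"
    using wb po unfolding way_below_on_def partial_order_on_rel_def by auto
  have "directed_on D le {y}" "is_lub_on D le {y} y"
    using y yy by (auto simp: directed_on_def is_lub_on_def)
  then show ?thesis using wb yy unfolding way_below_on_def by blast
qed

lemma way_below_on_least:
  assumes "z \<in> D" "F \<in> D" "\<forall>G\<in>D. le z G"
  shows "way_below_on D le z F"
  using assms unfolding way_below_on_def directed_on_def by blast

lemma basis_on_carrier:
  assumes po: "partial_order_on_rel D le" and B: "basis_on D le B"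
  shows "basis_on D le D"
  unfolding basis_on_def
proof (intro conjI ballI)
  show "D \<subseteq> D" by simp
  fix x assume x: "x \<in> D"
  let ?Bx = "{b\<in>B. way_below_on D le b x}" and ?Dx = "{b\<in>D. way_below_on D le b x}"
  have BD: "B \<subseteq> D" and dB: "directed_on D le ?Bx" and lB: "is_lub_on D le ?Bx x"
    using B x by (auto simp: basis_on_def)
  have trans: "\<And>a b c. a \<in> D \<Longrightarrow> b \<in> D \<Longrightarrow> c \<in> D \<Longrightarrow> le a b \<Longrightarrow> le b c \<Longrightarrow> le a c"
    using po unfolding partial_order_on_rel_def by blast
  have xx: "le x x" using po x unfolding partial_order_on_rel_def by blast
  have cofinal: "\<exists>b\<in>?Bx. le y b" if "y \<in> ?Dx" for y
    using that dB lB xx unfolding way_below_on_def by blast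
  show "directed_on D le ?Dx"
    unfolding directed_on_def
  proof (intro conjI ballI)
    show "?Dx \<subseteq> D" by blast
    show "?Dx \<noteq> {}" using dB BD unfolding directed_on_def by blast
    fix y1 y2 assume y: "y1 \<in> ?Dx" "y2 \<in> ?Dx"
    then obtain b1 b2 where b: "b1 \<in> ?Bx" "le y1 b1" "b2 \<in> ?Bx" "le y2 b2" using cofinal by blast
    then obtain b where "b \<in> ?Bx" "le b1 b" "le b2 b" using dB unfolding directed_on_def by blast
    moreover have "le y1 b" "le y2 b" using trans y b \<open>b \<in> ?Bx\<close> \<open>le b1 b\<close> \<open>le b2 b\<close> BD by blast+
    ultimately show "\<exists>z\<in>?Dx. le y1 z \<and> le y2 z" using BD by blast
  qed
  show "is_lub_on D le ?Dx x"
    unfolding is_lub_on_def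
  proof (intro conjI ballI impI)
    show "le y x" if "y \<in> ?Dx" for y using that way_below_on_imp_le[OF po] by blast
    fix v assume "v \<in> D" "\<forall>y\<in>?Dx. le y v"
    then show "le x v" using lB BD unfolding is_lub_on_def by blast
  qed (rule x)
qed

lemma continuous_dcpo_onI:
  assumes "dcpo_on D le" "basis_on D le B"
  shows "continuous_dcpo_on D le"
  using assms basis_on_carrier unfolding continuous_dcpo_on_def dcpo_on_def by blast

abbreviation way_below :: "'a::order \<Rightarrow> 'a \<Rightarrow> bool" (infix "\<lless>" 50) where
  "x \<lless> y \<equiv> way_below_on UNIV (\<le>) x y"

lemma partial_order_on_rel_UNIV: "partial_order_on_rel (UNIV::'a::order set) (\<le>)"
  by (auto simp: partial_order_on_rel_def)

lemma way_below_imp_le: "x \<lless> y \<Longrightarrow> x \<le> y"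
  using way_below_on_imp_le[OF partial_order_on_rel_UNIV] .

lemma way_below_le_trans: "x \<lless> y \<Longrightarrow> y \<le> z \<Longrightarrow> x \<lless> z"
  unfolding way_below_on_def by (meson order_trans UNIV_I)

lemma le_way_below_trans: "x \<le> y \<Longrightarrow> y \<lless> z \<Longrightarrow> x \<lless> z"
  unfolding way_below_on_def by (meson order_trans UNIV_I)

lemma continuous_dcpo_way_below:
  assumes "continuous_dcpo_on (UNIV :: 'a::order set) (\<le>)"
  shows "directed_on UNIV (\<le>) {y. y \<lless> (x::'a)}" "is_lub_on UNIV (\<le>) {y. y \<lless> x} x"
  using assms unfolding continuous_dcpo_on_def basis_on_def by auto

lemma way_below_lubD:
  assumes C: "continuous_dcpo_on (UNIV :: 'a::order set) (\<le>)"
    and S: "directed_on UNIV (\<le>) S" "is_lub_on UNIV (\<le>) S (u::'a)" and wb: "x \<lless> u"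
  shows "\<exists>s\<in>S. x \<lless> s"
proof -
  let ?T = "{w. \<exists>s\<in>S. w \<lless> s}"
  note approx = continuous_dcpo_way_below[OF C]
  have "directed_on UNIV (\<le>) ?T"
    unfolding directed_on_def
  proof (intro conjI ballI)
    obtain s where "s \<in> S" using S unfolding directed_on_def by blast
    moreover obtain w where "w \<lless> s" using approx(1)[of s] unfolding directed_on_def by blast
    ultimately show "?T \<noteq> {}" by blast
    fix w1 w2 assume "w1 \<in> ?T" "w2 \<in> ?T"
    then obtain s1 s2 where s: "s1 \<in> S" "w1 \<lless> s1" "s2 \<in> S" "w2 \<lless> s2" by blast
    then obtain s3 where s3: "s3 \<in> S" "s1 \<le> s3" "s2 \<le> s3" using S unfolding directed_on_def by blast
    then have "w1 \<lless> s3" "w2 \<lless> s3" using s way_below_le_trans by blast+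
    then obtain w where "w \<lless> s3" "w1 \<le> w" "w2 \<le> w"
      using approx(1)[of s3] unfolding directed_on_def by blast
    then show "\<exists>z\<in>?T. w1 \<le> z \<and> w2 \<le> z" using s3 by blast
  qed simp
  moreover have "is_lub_on UNIV (\<le>) ?T u"
    unfolding is_lub_on_def
  proof (intro conjI ballI impI)
    show "w \<le> u" if "w \<in> ?T" for w
      using that S way_below_imp_le order_trans unfolding is_lub_on_def by blast
    fix v assume "\<forall>w\<in>?T. w \<le> v"
    then have "s \<le> v" if "s \<in> S" for s
      using approx(2)[of s] that unfolding is_lub_on_def by blast
    then show "u \<le> v" using S unfolding is_lub_on_def by blast
  qed simp
  ultimately have "\<exists>t\<in>?T. x \<le> t" using wb unfolding way_below_on_def by blast
  then show ?thesis using le_way_below_trans by blast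
qed

lemma LX_iff: "h \<in> LX \<longleftrightarrow> (\<forall>x y. x \<le> y \<longrightarrow> h x \<le> h y) \<and>
   (\<forall>S u. directed_on UNIV (\<le>) S \<and> is_lub_on UNIV (\<le>) S u \<longrightarrow> h u = (SUP s\<in>S. h s))"
  by (simp add: LX_def scott_cont_on_def)

lemma LX_mono: "h \<in> LX \<Longrightarrow> x \<le> y \<Longrightarrow> h x \<le> h y"
  by (simp add: LX_iff)

lemma LX_lub: "h \<in> LX \<Longrightarrow> directed_on UNIV (\<le>) S \<Longrightarrow> is_lub_on UNIV (\<le>) S u \<Longrightarrow> h u = (SUP s\<in>S. h s)"
  by (simp add: LX_iff)

lemma LX_SUP:
  fixes f :: "'i \<Rightarrow> 'a::order \<Rightarrow> ennreal"
  assumes "\<And>i. i \<in> I \<Longrightarrow> f i \<in> LX"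
  shows "(\<lambda>z. SUP i\<in>I. f i z) \<in> LX"
  unfolding LX_iff
proof (intro conjI allI impI)
  fix x y :: 'a assume "x \<le> y"
  then show "(SUP i\<in>I. f i x) \<le> (SUP i\<in>I. f i y)"
    using assms LX_mono by (intro SUP_mono) blast
next
  fix S and u :: 'a assume "directed_on UNIV (\<le>) S \<and> is_lub_on UNIV (\<le>) S u"
  then have "(SUP i\<in>I. f i u) = (SUP i\<in>I. SUP s\<in>S. f i s)"
    using assms LX_lub by (intro SUP_cong) auto
  also have "\<dots> = (SUP s\<in>S. SUP i\<in>I. f i s)" by (rule SUP_commute)
  finally show "(SUP i\<in>I. f i u) = (SUP s\<in>S. SUP i\<in>I. f i s)" .
qed

lemma LX_const: "(\<lambda>_. c) \<in> LX"
  unfolding LX_iff by (auto simp: directed_on_def)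

lemma LX_cmult: "h \<in> LX \<Longrightarrow> (\<lambda>z. a * h z) \<in> LX"
  unfolding LX_iff by (auto simp: SUP_mult_left_ennreal intro: mult_left_mono)

lemma LX_add:
  assumes h: "h \<in> LX" and g: "g \<in> LX"
  shows "(\<lambda>z. h z + g z) \<in> LX"
  unfolding LX_iff
proof (intro conjI allI impI)
  fix x y :: 'a assume "x \<le> y"
  then show "h x + g x \<le> h y + g y" using h g LX_mono add_mono by blast
next
  fix S and u :: 'a assume S: "directed_on UNIV (\<le>) S \<and> is_lub_on UNIV (\<le>) S u"
  have "h u + g u = (SUP s\<in>S. h s) + (SUP s\<in>S. g s)" using S h g LX_lub by metis
  also have "\<dots> = (SUP s\<in>S. h s + g s)"
  proof (rule SUP_add_directed_ennreal[symmetric])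
    fix i j assume "i \<in> S" "j \<in> S"
    then obtain k where "k \<in> S" "i \<le> k" "j \<le> k" using S unfolding directed_on_def by blast
    then show "\<exists>k\<in>S. h i + g j \<le> h k + g k" using h g LX_mono by (meson add_mono)
  qed
  finally show "h u + g u = (SUP s\<in>S. h s + g s)" .
qed

lemma LX_one_plus: "h \<in> LX \<Longrightarrow> (\<lambda>x. 1 + h x) \<in> LX"
  using LX_add[OF LX_const] by blast

lemma is_lub_on_LX:
  assumes "H \<subseteq> LX"
  shows "is_lub_on LX (\<le>) H (\<lambda>z. SUP h\<in>H. h z)"
  using assms LX_SUP[of H "\<lambda>h. h"] unfolding is_lub_on_def
  by (auto simp: le_fun_def intro: SUP_upper SUP_least)

lemma is_lub_on_LX_eq:
  assumes "H \<subseteq> LX" "is_lub_on LX (\<le>) H u"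
  shows "u = (\<lambda>z. SUP h\<in>H. h z)"
  using assms is_lub_on_LX[OF assms(1)] unfolding is_lub_on_def by (blast intro: antisym)

text \<open>The step function \<open>sup\<^sub>x\<^sub>\<in>\<^sub>P c x \<cdot> \<chi>\<^sub>\<up>\<^sub>x\<close> of the paper, where \<open>\<up>x = {z. x \<lless> z}\<close>
  is Scott-open; these are the building blocks of every element of \<open>LX\<close>.\<close>
definition step_fun :: "'a::order set \<Rightarrow> ('a \<Rightarrow> ennreal) \<Rightarrow> 'a \<Rightarrow> ennreal" where
  "step_fun P c = (\<lambda>z. SUP x\<in>{x\<in>P. x \<lless> z}. c x)"

lemma step_fun_LX:
  assumes C: "continuous_dcpo_on (UNIV :: 'a::order set) (\<le>)"
  shows "step_fun (P::'a set) c \<in> LX"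
  unfolding LX_iff
proof (intro conjI allI impI)
  have mono: "step_fun P c x \<le> step_fun P c y" if "x \<le> y" for x y
    using that unfolding step_fun_def by (intro SUP_subset_mono) (auto intro: way_below_le_trans)
  then show "\<And>x y. x \<le> y \<Longrightarrow> step_fun P c x \<le> step_fun P c y" .
  fix S and u :: 'a assume S: "directed_on UNIV (\<le>) S \<and> is_lub_on UNIV (\<le>) S u"
  show "step_fun P c u = (SUP s\<in>S. step_fun P c s)"
  proof (rule antisym)
    show "step_fun P c u \<le> (SUP s\<in>S. step_fun P c s)"
      unfolding step_fun_def
    proof (rule SUP_least)
      fix x assume x: "x \<in> {x\<in>P. x \<lless> u}"
      then obtain s where s: "s \<in> S" "x \<lless> s" using way_below_lubD[OF C] S by blast
      then have "c x \<le> (SUP x\<in>{x\<in>P. x \<lless> s}. c x)" using x by (intro SUP_upper) auto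
      also have "\<dots> \<le> (SUP s\<in>S. SUP x\<in>{x\<in>P. x \<lless> s}. c x)" using s by (intro SUP_upper)
      finally show "c x \<le> (SUP s\<in>S. SUP x\<in>{x\<in>P. x \<lless> s}. c x)" .
    qed
    show "(SUP s\<in>S. step_fun P c s) \<le> step_fun P c u"
      using S mono unfolding is_lub_on_def by (blast intro: SUP_least)
  qed
qed

lemma step_fun_le:
  assumes "h \<in> LX" "\<And>x. x \<in> P \<Longrightarrow> c x \<le> h x"
  shows "step_fun P c \<le> h"
  unfolding step_fun_def le_fun_def
  using assms LX_mono way_below_imp_le order_trans by (blast intro: SUP_least)

lemma step_fun_mono:
  assumes "\<And>x. x \<in> P \<Longrightarrow> c x \<le> c' x"
  shows "step_fun P c \<le> step_fun P c'"
  unfolding step_fun_def le_fun_def using assms by (auto intro: SUP_mono)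

lemma step_fun_cmult: "step_fun P (\<lambda>x. t * c x) = (\<lambda>z. t * step_fun P c z)"
  unfolding step_fun_def by (simp add: SUP_mult_left_ennreal)

lemma step_fun_cong: "(\<And>x. x \<in> P \<Longrightarrow> c x = c' x) \<Longrightarrow> step_fun P c = step_fun P c'"
  unfolding step_fun_def by (intro ext SUP_cong) auto

lemma step_fun_singleton: "step_fun {x} c = (\<lambda>z. c x * step_fun {x} (\<lambda>_. 1) z)"
proof -
  have "step_fun {x} c = step_fun {x} (\<lambda>_. c x * 1)" by (rule step_fun_cong) simp
  then show ?thesis by (simp only: step_fun_cmult)
qed

lemma step_fun_eq_on_support:
  assumes "Q \<subseteq> P" "\<And>x. x \<in> P \<Longrightarrow> x \<notin> Q \<Longrightarrow> c x = 0"
  shows "step_fun P c = step_fun Q c"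
  unfolding step_fun_def
proof (intro ext antisym)
  fix z
  show "(SUP x\<in>{x\<in>P. x \<lless> z}. c x) \<le> (SUP x\<in>{x\<in>Q. x \<lless> z}. c x)"
    using assms by (intro SUP_least) (force intro: SUP_upper)
  show "(SUP x\<in>{x\<in>Q. x \<lless> z}. c x) \<le> (SUP x\<in>{x\<in>P. x \<lless> z}. c x)"
    using assms(1) by (intro SUP_subset_mono) auto
qed

lemma step_fun_add_le: "step_fun P (\<lambda>x. c x + c' x) \<le> (\<lambda>z. step_fun P c z + step_fun P c' z)"
  unfolding step_fun_def le_fun_def
  by (intro allI SUP_least) (intro add_mono SUP_upper; auto)

lemma step_fun_insert_le: "step_fun (insert x Q) c \<le> (\<lambda>z. step_fun {x} c z + step_fun Q c z)"
  unfolding step_fun_def le_fun_def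
proof (intro allI SUP_least)
  fix z y assume y: "y \<in> {y\<in>insert x Q. y \<lless> z}"
  show "c y \<le> (SUP y\<in>{y\<in>{x}. y \<lless> z}. c y) + (SUP y\<in>{y\<in>Q. y \<lless> z}. c y)"
  proof (cases "y = x")
    case True
    then show ?thesis using y by (intro add_increasing2[rotated] SUP_upper) auto
  next
    case False
    then show ?thesis using y by (intro add_increasing[rotated] SUP_upper) auto
  qed
qed

lemma step_fun_empty: "step_fun {} c = (\<lambda>_. 0)"
  unfolding step_fun_def by (simp add: bot_ennreal)

text \<open>Monotone sublinear functionals on the cone \<open>\<real>\<^sub>+\<^sup>P\<close>, where a vector is any
  \<open>c :: 'a \<Rightarrow> real\<close> and only its values on \<open>P\<close> matter.\<close>
definition sublinear_on :: "'a set \<Rightarrow> (('a \<Rightarrow> real) \<Rightarrow> real) \<Rightarrow> bool" where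
  "sublinear_on P \<Psi> \<longleftrightarrow>
    (\<forall>c c'. (\<forall>x\<in>P. c x = c' x) \<longrightarrow> \<Psi> c = \<Psi> c') \<and>
    (\<forall>c c'. (\<forall>x\<in>P. 0 \<le> c x \<and> c x \<le> c' x) \<longrightarrow> \<Psi> c \<le> \<Psi> c') \<and>
    (\<forall>c c'. (\<forall>x\<in>P. 0 \<le> c x \<and> 0 \<le> c' x) \<longrightarrow> \<Psi> (\<lambda>y. c y + c' y) \<le> \<Psi> c + \<Psi> c') \<and>
    (\<forall>c t. (\<forall>x\<in>P. 0 \<le> c x) \<and> 0 \<le> t \<longrightarrow> \<Psi> (\<lambda>y. t * c y) = t * \<Psi> c)"

lemma sublinear_onI:
  assumes "\<And>c c'. (\<And>x. x \<in> P \<Longrightarrow> c x = c' x) \<Longrightarrow> \<Psi> c = \<Psi> c'"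
    and "\<And>c c'. (\<And>x. x \<in> P \<Longrightarrow> 0 \<le> c x \<and> c x \<le> c' x) \<Longrightarrow> \<Psi> c \<le> \<Psi> c'"
    and "\<And>c c'. (\<And>x. x \<in> P \<Longrightarrow> 0 \<le> c x \<and> 0 \<le> c' x) \<Longrightarrow> \<Psi> (\<lambda>y. c y + c' y) \<le> \<Psi> c + \<Psi> c'"
    and "\<And>c t. (\<And>x. x \<in> P \<Longrightarrow> 0 \<le> c x) \<Longrightarrow> 0 \<le> t \<Longrightarrow> \<Psi> (\<lambda>y. t * c y) = t * \<Psi> c"
  shows "sublinear_on P \<Psi>"
  unfolding sublinear_on_def by (intro conjI allI impI) (auto intro: assms)

context
  fixes P \<Psi> assumes sl: "sublinear_on P \<Psi>"
begin

lemma sublinear_on_cong: "(\<And>x. x \<in> P \<Longrightarrow> c x = c' x) \<Longrightarrow> \<Psi> c = \<Psi> c'"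
  using sl unfolding sublinear_on_def by (elim conjE allE impE) auto

lemma sublinear_on_mono: "(\<And>x. x \<in> P \<Longrightarrow> 0 \<le> c x) \<Longrightarrow> (\<And>x. x \<in> P \<Longrightarrow> c x \<le> c' x) \<Longrightarrow> \<Psi> c \<le> \<Psi> c'"
  using sl unfolding sublinear_on_def by (elim conjE allE impE) auto

lemma sublinear_on_add:
  "(\<And>x. x \<in> P \<Longrightarrow> 0 \<le> c x) \<Longrightarrow> (\<And>x. x \<in> P \<Longrightarrow> 0 \<le> c' x) \<Longrightarrow> \<Psi> (\<lambda>y. c y + c' y) \<le> \<Psi> c + \<Psi> c'"
  using sl unfolding sublinear_on_def by (elim conjE allE impE) auto

lemma sublinear_on_cmult: "(\<And>x. x \<in> P \<Longrightarrow> 0 \<le> c x) \<Longrightarrow> 0 \<le> t \<Longrightarrow> \<Psi> (\<lambda>y. t * c y) = t * \<Psi> c"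
  using sl unfolding sublinear_on_def by (elim conjE allE impE) auto

lemma sublinear_on_zero: "\<Psi> (\<lambda>_. 0) = 0"
  using sublinear_on_cmult[of "\<lambda>_. 0" 0] by simp

end

lemma convex_subgradient:
  fixes \<phi> :: "real \<Rightarrow> real"
  assumes mono: "\<And>s s'. 0 \<le> s \<Longrightarrow> s \<le> s' \<Longrightarrow> \<phi> s \<le> \<phi> s'"
    and lipschitz: "\<And>s s'. 0 \<le> s \<Longrightarrow> s \<le> s' \<Longrightarrow> \<phi> s' \<le> \<phi> s + (s' - s) * L"
    and convex: "\<And>s1 s s2. 0 \<le> s1 \<Longrightarrow> s1 < s \<Longrightarrow> s < s2 \<Longrightarrow>
      (s2 - s1) * \<phi> s \<le> (s2 - s) * \<phi> s1 + (s - s1) * \<phi> s2"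
    and u: "0 \<le> u"
  shows "\<exists>t. 0 \<le> t \<and> t \<le> L \<and> (\<forall>s\<ge>0. \<phi> u - u * t \<le> \<phi> s - s * t)"
proof (cases "u = 0")
  case True
  have "0 \<le> L" using mono[of 0 1] lipschitz[of 0 1] by simp
  then show ?thesis using mono True by auto
next
  case False
  then have up: "0 < u" using u by simp
  define slope where "slope s = (\<phi> u - \<phi> s) / (u - s)" for s
  define t where "t = Sup (slope ` {0..<u})"
  have slope_le_L: "slope s \<le> L" if "0 \<le> s" "s < u" for s
    using lipschitz[of s u] that by (simp add: slope_def divide_le_eq mult.commute)
  have bdd: "bdd_above (slope ` {0..<u})"
    using slope_le_L by (auto intro!: bdd_aboveI[of _ L])
  have slope_le_t: "slope s \<le> t" if "0 \<le> s" "s < u" for s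
    unfolding t_def using that bdd by (intro cSup_upper) auto
  have "0 \<le> slope 0" using mono[of 0 u] up by (simp add: slope_def)
  then have t0: "0 \<le> t" using slope_le_t[of 0] up by linarith
  have tL: "t \<le> L" unfolding t_def using up slope_le_L by (intro cSup_least) auto
  have "\<phi> u - u * t \<le> \<phi> s - s * t" if s: "0 \<le> s" for s
  proof (cases u s rule: linorder_cases)
    case greater
    then have "\<phi> u - \<phi> s \<le> t * (u - s)"
      using slope_le_t[OF s] by (simp add: slope_def divide_le_eq)
    then show ?thesis by (simp add: algebra_simps)
  next
    case less
    have "t \<le> (\<phi> s - \<phi> u) / (s - u)"
      unfolding t_def
    proof (rule cSup_least)
      show "slope ` {0..<u} \<noteq> {}" using up by auto
      fix v assume "v \<in> slope ` {0..<u}"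
      then obtain s1 where s1: "0 \<le> s1" "s1 < u" and v: "v = slope s1" by auto
      have "(\<phi> u - \<phi> s1) * (s - u) \<le> (\<phi> s - \<phi> u) * (u - s1)"
        using convex[OF s1 less] by (simp add: algebra_simps)
      then show "v \<le> (\<phi> s - \<phi> u) / (s - u)"
        unfolding v slope_def using s1 less by (simp add: divide_simps)
    qed
    then have "t * (s - u) \<le> \<phi> s - \<phi> u" using less by (simp add: le_divide_eq)
    then show ?thesis by (simp add: algebra_simps)
  qed simp
  then show ?thesis using t0 tL by blast
qed

lemma sublinear_on_coordinate_subgradient:
  assumes sl: "sublinear_on P \<Psi>" and x: "x \<in> P" and c0: "\<And>y. y \<in> P \<Longrightarrow> 0 \<le> c0 y"
  shows "\<exists>t. 0 \<le> t \<and> t \<le> \<Psi> ((\<lambda>_. 0)(x := 1)) \<and>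
    (\<forall>s\<ge>0. \<Psi> c0 - c0 x * t \<le> \<Psi> (c0(x := s)) - s * t)"
proof -
  define e where "e = (\<lambda>_::'a. 0::real)(x := 1)"
  note cong = sublinear_on_cong[OF sl] and mono = sublinear_on_mono[OF sl]
    and add = sublinear_on_add[OF sl] and cmult = sublinear_on_cmult[OF sl]
  have line_mono: "\<Psi> (c0(x := s)) \<le> \<Psi> (c0(x := s'))" if "0 \<le> s" "s \<le> s'" for s s'
    using that c0 by (intro mono) auto
  have line_lipschitz: "\<Psi> (c0(x := s')) \<le> \<Psi> (c0(x := s)) + (s' - s) * \<Psi> e"
    if "0 \<le> s" "s \<le> s'" for s s'
  proof -
    have "c0(x := s') = (\<lambda>y. (c0(x := s)) y + (s' - s) * e y)" by (auto simp: e_def)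
    then have "\<Psi> (c0(x := s')) \<le> \<Psi> (c0(x := s)) + \<Psi> (\<lambda>y. (s' - s) * e y)"
      using that c0 by (simp only:) (intro add; auto simp: e_def)
    also have "\<Psi> (\<lambda>y. (s' - s) * e y) = (s' - s) * \<Psi> e"
      using that by (intro cmult) (auto simp: e_def)
    finally show ?thesis .
  qed
  have line_convex:
    "(s2 - s1) * \<Psi> (c0(x := s)) \<le> (s2 - s) * \<Psi> (c0(x := s1)) + (s - s1) * \<Psi> (c0(x := s2))"
    if s: "0 \<le> s1" "s1 < s" "s < s2" for s1 s s2
  proof -
    define l where "l = (s2 - s) / (s2 - s1)"
    define m where "m = (s - s1) / (s2 - s1)"
    have lm: "0 \<le> l" "0 \<le> m" "l + m = 1" "l * s1 + m * s2 = s"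
      using s by (auto simp: l_def m_def divide_simps) (simp add: algebra_simps)
    have "\<Psi> (c0(x := s)) = \<Psi> (\<lambda>y. l * (c0(x := s1)) y + m * (c0(x := s2)) y)"
      using lm by (intro cong) (auto simp: distrib_right[symmetric])
    also have "\<dots> \<le> \<Psi> (\<lambda>y. l * (c0(x := s1)) y) + \<Psi> (\<lambda>y. m * (c0(x := s2)) y)"
      using s c0 lm by (intro add) auto
    also have "\<dots> = l * \<Psi> (c0(x := s1)) + m * \<Psi> (c0(x := s2))"
      using s c0 lm cmult[of "c0(x := s1)" l] cmult[of "c0(x := s2)" m] by force
    finally have "(s2 - s1) * \<Psi> (c0(x := s)) \<le> (s2 - s1) * (l * \<Psi> (c0(x := s1)) + m * \<Psi> (c0(x := s2)))"
      using s by (intro mult_left_mono) auto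
    also have "\<dots> = (s2 - s) * \<Psi> (c0(x := s1)) + (s - s1) * \<Psi> (c0(x := s2))"
      using s by (simp add: l_def m_def divide_simps)
    finally show ?thesis .
  qed
  have "0 \<le> c0 x" using c0 x by simp
  then show ?thesis
    using convex_subgradient[of "\<lambda>s. \<Psi> (c0(x := s))" "\<Psi> e" "c0 x",
        OF line_mono line_lipschitz line_convex] by (simp add: e_def)
qed

definition coordinate_inf :: "(('a \<Rightarrow> real) \<Rightarrow> real) \<Rightarrow> 'a \<Rightarrow> real \<Rightarrow> ('a \<Rightarrow> real) \<Rightarrow> real" where
  "coordinate_inf \<Psi> x t d = (INF s\<in>{0..}. \<Psi> (d(x := s)) - s * t)"

context
  fixes Q x \<Psi> t
  assumes sl: "sublinear_on (insert x Q) \<Psi>" and x: "x \<notin> Q"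
    and t: "0 \<le> t" "t \<le> \<Psi> ((\<lambda>_. 0)(x := 1))"
begin

lemma coordinate_inf_bdd:
  assumes d: "\<forall>y\<in>Q. 0 \<le> d y" and s: "0 \<le> s"
  shows "0 \<le> \<Psi> (d(x := s)) - s * t"
proof -
  have "s * t \<le> s * \<Psi> ((\<lambda>_. 0)(x := 1))" using s t by (intro mult_left_mono)
  also have "\<dots> = \<Psi> (\<lambda>y. s * ((\<lambda>_. 0)(x := 1)) y)"
    using s by (intro sublinear_on_cmult[OF sl, symmetric]) auto
  also have "\<dots> \<le> \<Psi> (d(x := s))"
    using d s x by (intro sublinear_on_mono[OF sl]) auto
  finally show ?thesis by simp
qed

lemma coordinate_inf_le:
  assumes "\<forall>y\<in>Q. 0 \<le> d y" "0 \<le> s"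
  shows "coordinate_inf \<Psi> x t d \<le> \<Psi> (d(x := s)) - s * t"
  unfolding coordinate_inf_def
  using assms coordinate_inf_bdd[OF assms(1)]
  by (intro cINF_lower) (auto intro!: bdd_belowI[of _ 0])

lemma coordinate_inf_greatest:
  "(\<And>s. 0 \<le> s \<Longrightarrow> m \<le> \<Psi> (d(x := s)) - s * t) \<Longrightarrow> m \<le> coordinate_inf \<Psi> x t d"
  unfolding coordinate_inf_def by (rule cINF_greatest) auto

lemma sublinear_on_coordinate_inf: "sublinear_on Q (coordinate_inf \<Psi> x t)"
proof (rule sublinear_onI)
  note le = coordinate_inf_le and greatest = coordinate_inf_greatest
  fix d d' :: "'a \<Rightarrow> real"
  {
    assume "\<And>y. y \<in> Q \<Longrightarrow> d y = d' y"
    then have "\<Psi> (d(x := s)) = \<Psi> (d'(x := s))" for s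
      by (intro sublinear_on_cong[OF sl]) auto
    then show "coordinate_inf \<Psi> x t d = coordinate_inf \<Psi> x t d'"
      by (simp add: coordinate_inf_def)
  next
    assume d: "\<And>y. y \<in> Q \<Longrightarrow> 0 \<le> d y \<and> d y \<le> d' y"
    show "coordinate_inf \<Psi> x t d \<le> coordinate_inf \<Psi> x t d'"
    proof (rule greatest)
      fix s :: real assume s: "0 \<le> s"
      have "coordinate_inf \<Psi> x t d \<le> \<Psi> (d(x := s)) - s * t" using d s by (intro le) auto
      also have "\<Psi> (d(x := s)) \<le> \<Psi> (d'(x := s))"
        using d s by (intro sublinear_on_mono[OF sl]) auto
      finally show "coordinate_inf \<Psi> x t d \<le> \<Psi> (d'(x := s)) - s * t" by simp
    qed
  next
    assume d: "\<And>y. y \<in> Q \<Longrightarrow> 0 \<le> d y \<and> 0 \<le> d' y"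
    have "coordinate_inf \<Psi> x t (\<lambda>y. d y + d' y) \<le> (\<Psi> (d(x := s)) - s * t) + (\<Psi> (d'(x := s')) - s' * t)"
      if s: "0 \<le> s" "0 \<le> s'" for s s'
    proof -
      have "coordinate_inf \<Psi> x t (\<lambda>y. d y + d' y) \<le> \<Psi> ((\<lambda>y. d y + d' y)(x := s + s')) - (s + s') * t"
        using d s by (intro le) auto
      also have "(\<lambda>y. d y + d' y)(x := s + s') = (\<lambda>y. (d(x := s)) y + (d'(x := s')) y)" by auto
      also have "\<Psi> \<dots> \<le> \<Psi> (d(x := s)) + \<Psi> (d'(x := s'))"
        using d s by (intro sublinear_on_add[OF sl]) auto
      finally show ?thesis by (simp add: algebra_simps)
    qed
    then have "coordinate_inf \<Psi> x t (\<lambda>y. d y + d' y) - (\<Psi> (d'(x := s')) - s' * t) \<le> coordinate_inf \<Psi> x t d"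
      if "0 \<le> s'" for s'
      using that by (intro greatest) (simp add: algebra_simps)
    then have "coordinate_inf \<Psi> x t (\<lambda>y. d y + d' y) - coordinate_inf \<Psi> x t d \<le> coordinate_inf \<Psi> x t d'"
      by (intro greatest) (simp add: algebra_simps)
    then show "coordinate_inf \<Psi> x t (\<lambda>y. d y + d' y) \<le> coordinate_inf \<Psi> x t d + coordinate_inf \<Psi> x t d'"
      by simp
  }
next
  fix d :: "'a \<Rightarrow> real" and r :: real
  assume d: "\<And>y. y \<in> Q \<Longrightarrow> 0 \<le> d y" and r: "0 \<le> r"
  show "coordinate_inf \<Psi> x t (\<lambda>y. r * d y) = r * coordinate_inf \<Psi> x t d"
  proof (cases "r = 0")
    case True
    have "coordinate_inf \<Psi> x t (\<lambda>_. 0) \<le> \<Psi> ((\<lambda>_. 0)(x := 0)) - 0 * t"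
      by (intro coordinate_inf_le) auto
    moreover have "0 \<le> coordinate_inf \<Psi> x t (\<lambda>_. 0)"
      using coordinate_inf_bdd by (intro coordinate_inf_greatest) auto
    ultimately show ?thesis using True sublinear_on_zero[OF sl] by (simp add: fun_upd_idem)
  next
    case False
    then have r: "0 < r" using r by simp
    have scale: "\<Psi> ((\<lambda>y. r * d y)(x := r * s)) = r * \<Psi> (d(x := s))" if "0 \<le> s" for s
    proof -
      have "(\<lambda>y. r * d y)(x := r * s) = (\<lambda>y. r * (d(x := s)) y)" by auto
      then show ?thesis using d r that by (simp only:) (intro sublinear_on_cmult[OF sl]; auto)
    qed
    have "coordinate_inf \<Psi> x t (\<lambda>y. r * d y) \<le> r * (\<Psi> (d(x := s)) - s * t)" if "0 \<le> s" for s
      using coordinate_inf_le[of "\<lambda>y. r * d y" "r * s"] d r that scale[OF that]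
      by (simp add: algebra_simps)
    then have "coordinate_inf \<Psi> x t (\<lambda>y. r * d y) / r \<le> coordinate_inf \<Psi> x t d"
      using r by (intro coordinate_inf_greatest) (simp add: divide_le_eq mult.commute)
    moreover have "r * coordinate_inf \<Psi> x t d \<le> coordinate_inf \<Psi> x t (\<lambda>y. r * d y)"
    proof (rule coordinate_inf_greatest)
      fix s :: real assume s: "0 \<le> s"
      have "coordinate_inf \<Psi> x t d \<le> \<Psi> (d(x := s / r)) - (s / r) * t"
        using d s r by (intro coordinate_inf_le) auto
      also have "\<dots> = (\<Psi> ((\<lambda>y. r * d y)(x := s)) - s * t) / r"
        using scale[of "s / r"] s r by (simp add: field_simps)
      finally show "r * coordinate_inf \<Psi> x t d \<le> \<Psi> ((\<lambda>y. r * d y)(x := s)) - s * t"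
        using r by (simp add: le_divide_eq mult.commute)
    qed
    ultimately show ?thesis using r by (simp add: divide_le_eq mult.commute antisym)
  qed
qed

end

text \<open>A finite-dimensional Hahn-Banach theorem on the positive cone, proved by extending
  one coordinate at a time: a monotone sublinear functional has a nonnegative linear
  minorant touching it at any given point.\<close>
lemma sublinear_on_linear_minorant:
  assumes "finite P" "sublinear_on P \<Psi>" "\<forall>x\<in>P. 0 \<le> c0 x"
  shows "\<exists>a. (\<forall>x\<in>P. 0 \<le> a x) \<and> (\<forall>c. (\<forall>x\<in>P. 0 \<le> c x) \<longrightarrow> (\<Sum>x\<in>P. a x * c x) \<le> \<Psi> c)
    \<and> (\<Sum>x\<in>P. a x * c0 x) = \<Psi> c0"
  using assms
proof (induction P arbitrary: \<Psi> c0 rule: finite_induct)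
  case empty
  then have "\<Psi> c = 0" for c
    using sublinear_on_cong[OF empty(1), of c "\<lambda>_. 0"] sublinear_on_zero[OF empty(1)] by simp
  then show ?case by simp
next
  case (insert x Q)
  note sl = insert.prems(1) and c0 = insert.prems(2)
  have c0Q: "\<forall>y\<in>Q. 0 \<le> c0 y" and c0x: "0 \<le> c0 x" using c0 by auto
  obtain t where t: "0 \<le> t" "t \<le> \<Psi> ((\<lambda>_. 0)(x := 1))"
    and subgradient: "\<forall>s\<ge>0. \<Psi> c0 - c0 x * t \<le> \<Psi> (c0(x := s)) - s * t"
    using sublinear_on_coordinate_subgradient[OF sl insertI1, of c0] c0 by blast
  let ?\<Phi> = "coordinate_inf \<Psi> x t"
  note inf_le = coordinate_inf_le[OF sl insert.hyps(2) t]
  obtain a' where a'_nonneg: "\<forall>y\<in>Q. 0 \<le> a' y"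
    and a'_le: "\<forall>c. (\<forall>y\<in>Q. 0 \<le> c y) \<longrightarrow> (\<Sum>y\<in>Q. a' y * c y) \<le> ?\<Phi> c"
    and a'_eq: "(\<Sum>y\<in>Q. a' y * c0 y) = ?\<Phi> c0"
    using insert.IH[OF sublinear_on_coordinate_inf[OF sl insert.hyps(2) t] c0Q] by blast
  have sum_eq: "(\<Sum>y\<in>insert x Q. (a'(x := t)) y * c y) = t * c x + (\<Sum>y\<in>Q. a' y * c y)" for c
  proof -
    have "(\<Sum>y\<in>Q. (a'(x := t)) y * c y) = (\<Sum>y\<in>Q. a' y * c y)"
      using insert.hyps(2) by (intro sum.cong) auto
    then show ?thesis using insert.hyps by simp
  qed
  have "?\<Phi> c0 = \<Psi> c0 - c0 x * t"
  proof (rule antisym)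
    show "?\<Phi> c0 \<le> \<Psi> c0 - c0 x * t" using inf_le[OF c0Q c0x] by simp
    show "\<Psi> c0 - c0 x * t \<le> ?\<Phi> c0"
      using subgradient by (intro coordinate_inf_greatest[OF sl insert.hyps(2) t]) blast
  qed
  then have "(\<Sum>y\<in>insert x Q. (a'(x := t)) y * c0 y) = \<Psi> c0"
    using sum_eq[of c0] a'_eq by simp
  moreover have "(\<Sum>y\<in>insert x Q. (a'(x := t)) y * c y) \<le> \<Psi> c" if "\<forall>y\<in>insert x Q. 0 \<le> c y" for c
  proof -
    have c: "\<forall>y\<in>Q. 0 \<le> c y" "0 \<le> c x" using that by auto
    have "(\<Sum>y\<in>insert x Q. (a'(x := t)) y * c y) \<le> t * c x + ?\<Phi> c"
      using sum_eq[of c] a'_le c by simp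
    also have "\<dots> \<le> \<Psi> c" using inf_le[OF c] by (simp add: algebra_simps)
    finally show ?thesis .
  qed
  moreover have "\<forall>y\<in>insert x Q. 0 \<le> (a'(x := t)) y" using a'_nonneg t by simp
  ultimately show ?case by blast
qed

lemma directed_finite_upper_bound:
  assumes "finite G" "S \<noteq> {}" "\<forall>s1\<in>S. \<forall>s2\<in>S. \<exists>s3\<in>S. R s1 s3 \<and> R s2 s3" "transp R"
    "\<forall>g\<in>G. \<sigma> g \<in> S"
  shows "\<exists>s\<in>S. \<forall>g\<in>G. R (\<sigma> g) s"
  using assms(1,5)
proof (induction G rule: finite_induct)
  case (insert g G)
  then obtain s1 where s1: "s1 \<in> S" "\<forall>g\<in>G. R (\<sigma> g) s1" by auto
  moreover have "\<sigma> g \<in> S" using insert.prems by auto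
  ultimately obtain s3 where "s3 \<in> S" "R s1 s3" "R (\<sigma> g) s3" using assms(3) by blast
  then show ?case using s1 assms(4) by (auto dest: transpD)
qed (use assms(2) in auto)

lemma grid_point_below:
  assumes "0 < \<delta>" "\<forall>x\<in>P. 0 \<le> c x \<and> c x \<le> 1"
  obtains g where "g \<in> (\<Pi>\<^sub>E x\<in>P. (\<lambda>k. \<delta> * real k) ` {..nat \<lceil>1 / \<delta>\<rceil>})"
    "\<forall>x\<in>P. 0 \<le> g x \<and> g x \<le> c x \<and> c x - \<delta> \<le> g x"
proof
  define g where "g = restrict (\<lambda>x. \<delta> * real (nat \<lfloor>c x / \<delta>\<rfloor>)) P"
  show "\<forall>x\<in>P. 0 \<le> g x \<and> g x \<le> c x \<and> c x - \<delta> \<le> g x"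
  proof
    fix x assume x: "x \<in> P"
    then have gx: "g x = \<delta> * of_int \<lfloor>c x / \<delta>\<rfloor>" using assms by (simp add: g_def)
    have fl: "of_int \<lfloor>c x / \<delta>\<rfloor> \<le> c x / \<delta>" "c x / \<delta> - 1 \<le> of_int \<lfloor>c x / \<delta>\<rfloor>" by linarith+
    have "\<delta> * of_int \<lfloor>c x / \<delta>\<rfloor> \<le> \<delta> * (c x / \<delta>)" "\<delta> * (c x / \<delta> - 1) \<le> \<delta> * of_int \<lfloor>c x / \<delta>\<rfloor>"
      using fl assms(1) by (intro mult_left_mono; simp)+
    then show "0 \<le> g x \<and> g x \<le> c x \<and> c x - \<delta> \<le> g x" using gx x assms by (simp add: algebra_simps)
  qed
  show "g \<in> (\<Pi>\<^sub>E x\<in>P. (\<lambda>k. \<delta> * real k) ` {..nat \<lceil>1 / \<delta>\<rceil>})"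
    unfolding g_def
  proof (subst restrict_PiE, intro Pi_I)
    fix x assume x: "x \<in> P"
    have "c x / \<delta> \<le> 1 / \<delta>" using x assms by (simp add: divide_right_mono)
    then have "\<lfloor>c x / \<delta>\<rfloor> \<le> \<lceil>1 / \<delta>\<rceil>" by (meson floor_le_ceiling order_trans floor_mono)
    then show "\<delta> * real (nat \<lfloor>c x / \<delta>\<rfloor>) \<in> (\<lambda>k. \<delta> * real k) ` {..nat \<lceil>1 / \<delta>\<rceil>}"
      by (auto intro: nat_mono)
  qed
qed

text \<open>The compactness argument of the paper: the unit cube of \<open>\<real>\<^sub>+\<^sup>P\<close> is covered, up to a
  margin that the gap between \<open>a\<close> and \<open>b\<close> absorbs, by a finite grid, and one member of the
  directed family dominates the members chosen for the grid points.\<close>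
lemma linear_below_directed_SUP:
  fixes \<psi> :: "'s \<Rightarrow> ('a \<Rightarrow> real) \<Rightarrow> ennreal"
  assumes P: "finite P" and ab: "\<forall>x\<in>P. 0 \<le> a x \<and> a x < b x" and S: "S \<noteq> {}"
    and directed: "\<forall>s1\<in>S. \<forall>s2\<in>S. \<exists>s3\<in>S. (\<forall>c. \<psi> s1 c \<le> \<psi> s3 c) \<and> (\<forall>c. \<psi> s2 c \<le> \<psi> s3 c)"
    and mono: "\<forall>s\<in>S. \<forall>c c'. (\<forall>x\<in>P. 0 \<le> c x \<and> c x \<le> c' x) \<longrightarrow> \<psi> s c \<le> \<psi> s c'"
    and hom: "\<forall>s\<in>S. \<forall>c t. 0 < t \<longrightarrow> \<psi> s (\<lambda>x. t * c x) = ennreal t * \<psi> s c"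
    and below: "\<forall>c. (\<forall>x\<in>P. 0 \<le> c x) \<longrightarrow> ennreal (\<Sum>x\<in>P. b x * c x) \<le> (SUP s\<in>S. \<psi> s c)"
  shows "\<exists>s\<in>S. \<forall>c. (\<forall>x\<in>P. 0 \<le> c x) \<longrightarrow> ennreal (\<Sum>x\<in>P. a x * c x) \<le> \<psi> s c"
proof (cases "P = {}")
  case True
  then show ?thesis using S by auto
next
  case False
  define m where "m = Min ((\<lambda>x. b x - a x) ` P)"
  have m: "0 < m" "\<And>x. x \<in> P \<Longrightarrow> m \<le> b x - a x"
    unfolding m_def using P False ab by (auto simp: Min_gr_iff)
  define B where "B = (\<Sum>x\<in>P. b x)"
  have b: "\<forall>x\<in>P. 0 \<le> b x" using ab by force
  then have B: "0 \<le> B" unfolding B_def by (intro sum_nonneg) auto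
  define \<delta> where "\<delta> = m / (4 * (B + 1))"
  have \<delta>: "0 < \<delta>" "\<delta> * B \<le> m / 4"
    using m B by (auto simp: \<delta>_def field_simps)
  define G where "G = (\<Pi>\<^sub>E x\<in>P. (\<lambda>k. \<delta> * real k) ` {..nat \<lceil>1 / \<delta>\<rceil>})"
  have "finite G" unfolding G_def using P by (intro finite_PiE) auto
  have "\<forall>g\<in>G. \<exists>s\<in>S. ennreal ((\<Sum>x\<in>P. b x * g x) - m / 4) \<le> \<psi> s g"
  proof
    fix g assume g: "g \<in> G"
    have "\<forall>x\<in>P. 0 \<le> g x" using g \<delta>(1) unfolding G_def by (auto simp: PiE_def Pi_def)
    show "\<exists>s\<in>S. ennreal ((\<Sum>x\<in>P. b x * g x) - m / 4) \<le> \<psi> s g"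
    proof (cases "(\<Sum>x\<in>P. b x * g x) \<le> m / 4")
      case False
      then have "ennreal ((\<Sum>x\<in>P. b x * g x) - m / 4) < ennreal (\<Sum>x\<in>P. b x * g x)"
        using m by (subst ennreal_less_iff) auto
      also have "\<dots> \<le> (SUP s\<in>S. \<psi> s g)"
        using below \<open>\<forall>x\<in>P. 0 \<le> g x\<close> by blast
      finally show ?thesis by (auto simp: less_SUP_iff intro: less_imp_le)
    qed (use S in \<open>auto simp: ennreal_neg\<close>)
  qed
  then have "\<exists>\<sigma>. \<forall>g\<in>G. \<sigma> g \<in> S \<and> ennreal ((\<Sum>x\<in>P. b x * g x) - m / 4) \<le> \<psi> (\<sigma> g) g"
    unfolding Bex_def by (rule bchoice)
  then obtain \<sigma> where \<sigma>: "\<forall>g\<in>G. \<sigma> g \<in> S \<and> ennreal ((\<Sum>x\<in>P. b x * g x) - m / 4) \<le> \<psi> (\<sigma> g) g"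
    by blast
  have "transp (\<lambda>s t. \<forall>c. \<psi> s c \<le> \<psi> t c)" by (rule transpI) (meson order_trans)
  then obtain s where s: "s \<in> S" and s_ub: "\<forall>g\<in>G. \<forall>c. \<psi> (\<sigma> g) c \<le> \<psi> s c"
    using directed_finite_upper_bound[OF \<open>finite G\<close> S directed, of \<sigma>] \<sigma> by blast
  show ?thesis
  proof (intro bexI[OF _ s] allI impI)
    fix c :: "'a \<Rightarrow> real" assume c: "\<forall>x\<in>P. 0 \<le> c x"
    show "ennreal (\<Sum>x\<in>P. a x * c x) \<le> \<psi> s c"
    proof (cases "\<forall>x\<in>P. c x = 0")
      case False
      define M where "M = Max (c ` P)"
      have "M \<in> c ` P" unfolding M_def using P \<open>P \<noteq> {}\<close> by (intro Max_in) auto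
      then obtain x0 where x0: "x0 \<in> P" "c x0 = M" by auto
      have cM: "c x \<le> M" if "x \<in> P" for x unfolding M_def using P that by simp
      have M: "0 < M" using False c cM by force
      define c' where "c' x = c x / M" for x
      have c': "\<forall>x\<in>P. 0 \<le> c' x \<and> c' x \<le> 1" "c' x0 = 1"
        using c cM M x0 by (auto simp: c'_def)
      obtain g where g: "g \<in> G" "\<forall>x\<in>P. 0 \<le> g x \<and> g x \<le> c' x \<and> c' x - \<delta> \<le> g x"
        using grid_point_below[OF \<delta>(1) c'(1)] unfolding G_def by blast
      have "m \<le> (\<Sum>x\<in>P. (b x - a x) * c' x)"
        using m(2)[OF x0(1)] c' P x0 ab by (intro order_trans[OF _ member_le_sum]) auto
      then have "m \<le> (\<Sum>x\<in>P. b x * c' x) - (\<Sum>x\<in>P. a x * c' x)"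
        by (simp add: algebra_simps sum_subtractf)
      moreover have "(\<Sum>x\<in>P. b x * c' x) - \<delta> * B \<le> (\<Sum>x\<in>P. b x * g x)"
      proof -
        have "(\<Sum>x\<in>P. b x * c' x) - \<delta> * B = (\<Sum>x\<in>P. b x * (c' x - \<delta>))"
          unfolding B_def by (simp add: algebra_simps sum_subtractf sum_distrib_left)
        also have "\<dots> \<le> (\<Sum>x\<in>P. b x * g x)"
          using b g by (intro sum_mono mult_left_mono) auto
        finally show ?thesis .
      qed
      ultimately have key: "(\<Sum>x\<in>P. a x * c' x) \<le> (\<Sum>x\<in>P. b x * g x) - m / 4"
        using \<delta>(2) m(1) by linarith
      have c_eq: "c = (\<lambda>x. M * c' x)" using M by (auto simp: c'_def)
      have "ennreal (\<Sum>x\<in>P. a x * c x) = ennreal M * ennreal (\<Sum>x\<in>P. a x * c' x)"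
        using M ab c' by (subst ennreal_mult[symmetric])
          (auto intro!: sum_nonneg simp: c_eq sum_distrib_left algebra_simps)
      also have "\<dots> \<le> ennreal M * \<psi> (\<sigma> g) g"
        using order_trans[OF ennreal_leI[OF key]] \<sigma> g(1) by (intro mult_left_mono) auto
      also have "\<dots> \<le> ennreal M * \<psi> s g" using s_ub g(1) by (intro mult_left_mono) auto
      also have "\<dots> \<le> ennreal M * \<psi> s c'" using mono s g(2) by (intro mult_left_mono) auto
      also have "\<dots> = \<psi> s c" using hom s M by (simp add: c_eq)
      finally show ?thesis .
    qed simp
  qed
qed

type_synonym 'a prevision = "('a \<Rightarrow> ennreal) \<Rightarrow> ennreal"

lemma hoare_prevD:
  assumes "F \<in> hoare_prev"
  shows hoare_prev_mono: "\<And>h h'. h \<in> LX \<Longrightarrow> h' \<in> LX \<Longrightarrow> h \<le> h' \<Longrightarrow> F h \<le> F h'"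
    and hoare_prev_lub: "\<And>H u. directed_on LX (\<le>) H \<Longrightarrow> is_lub_on LX (\<le>) H u \<Longrightarrow> F u = (SUP h\<in>H. F h)"
    and hoare_prev_cmult: "\<And>h a. h \<in> LX \<Longrightarrow> a \<noteq> \<infinity> \<Longrightarrow> F (\<lambda>x. a * h x) = a * F h"
    and hoare_prev_add: "\<And>h h'. h \<in> LX \<Longrightarrow> h' \<in> LX \<Longrightarrow> F (\<lambda>x. h x + h' x) \<le> F h + F h'"
    and hoare_prev_outside: "\<And>h. h \<notin> LX \<Longrightarrow> F h = 0"
  using assms by (simp_all add: hoare_prev_def scott_cont_on_def)

lemma hoare_prev_zero: "F \<in> hoare_prev \<Longrightarrow> F (\<lambda>_. 0) = 0"
  using hoare_prev_cmult[of F "\<lambda>_. 0" 0] LX_const[of 0] by simp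

lemma hoare_prev_SUP:
  assumes F: "F \<in> hoare_prev" and H: "H \<subseteq> LX" "H \<noteq> {}"
    and directed: "\<And>h1 h2. h1 \<in> H \<Longrightarrow> h2 \<in> H \<Longrightarrow> \<exists>h3\<in>H. h1 \<le> h3 \<and> h2 \<le> h3"
  shows "F (\<lambda>z. SUP h\<in>H. h z) = (SUP h\<in>H. F h)"
proof (rule hoare_prev_lub[OF F])
  show "directed_on LX (\<le>) H" unfolding directed_on_def using H directed by blast
qed (rule is_lub_on_LX[OF H(1)])

lemma hoare_prev_subD: "F \<in> hoare_prev_sub \<Longrightarrow> F \<in> hoare_prev"
  and hoare_prev_sub_one_plus: "F \<in> hoare_prev_sub \<Longrightarrow> h \<in> LX \<Longrightarrow> F (\<lambda>x. 1 + h x) \<le> 1 + F h"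
  by (auto simp: hoare_prev_sub_def)

lemma hoare_prev_normD: "F \<in> hoare_prev_norm \<Longrightarrow> F \<in> hoare_prev"
  and hoare_prev_norm_one_plus: "F \<in> hoare_prev_norm \<Longrightarrow> h \<in> LX \<Longrightarrow> F (\<lambda>x. 1 + h x) = 1 + F h"
  by (auto simp: hoare_prev_norm_def)

lemma partial_order_on_rel_prev_le:
  assumes "D \<subseteq> hoare_prev"
  shows "partial_order_on_rel D prev_le"
  unfolding partial_order_on_rel_def
proof (intro conjI ballI impI)
  fix F G assume FG: "F \<in> D" "G \<in> D" "prev_le F G \<and> prev_le G F"
  show "F = G"
  proof
    have "F \<in> hoare_prev" "G \<in> hoare_prev" using FG assms by auto
    fix h show "F h = G h"
      using FG hoare_prev_outside[OF \<open>F \<in> hoare_prev\<close>] hoare_prev_outside[OF \<open>G \<in> hoare_prev\<close>]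
      by (cases "h \<in> LX") (auto simp: prev_le_def intro: antisym)
  qed
next
  fix F G H assume "prev_le F G \<and> prev_le G H"
  then show "prev_le F H" unfolding prev_le_def by (meson order_trans)
qed (simp add: prev_le_def)

definition prev_Sup :: "'a::order prevision set \<Rightarrow> 'a prevision" where
  "prev_Sup S = (\<lambda>h. if h \<in> LX then SUP F\<in>S. F h else 0)"

lemma prev_Sup_hoare_prev:
  assumes S: "S \<subseteq> hoare_prev"
  shows "prev_Sup S \<in> hoare_prev"
  unfolding hoare_prev_def
proof (intro CollectI conjI ballI allI impI)
  show "scott_cont_on LX (\<le>) (prev_Sup S)"
    unfolding scott_cont_on_def
  proof (intro conjI ballI allI impI)
    fix h h' :: "'a \<Rightarrow> ennreal" assume "h \<in> LX" "h' \<in> LX" "h \<le> h'"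
    then show "prev_Sup S h \<le> prev_Sup S h'"
      unfolding prev_Sup_def using S by (auto intro!: SUP_mono hoare_prev_mono)
  next
    fix H and u :: "'a \<Rightarrow> ennreal" assume H: "directed_on LX (\<le>) H \<and> is_lub_on LX (\<le>) H u"
    then have "H \<subseteq> LX" "u \<in> LX" by (auto simp: directed_on_def is_lub_on_def)
    then have "prev_Sup S u = (SUP F\<in>S. SUP h\<in>H. F h)"
      using H S by (auto simp: prev_Sup_def intro!: SUP_cong hoare_prev_lub)
    also have "\<dots> = (SUP h\<in>H. SUP F\<in>S. F h)" by (rule SUP_commute)
    also have "\<dots> = (SUP h\<in>H. prev_Sup S h)"
      using \<open>H \<subseteq> LX\<close> by (intro SUP_cong) (auto simp: prev_Sup_def)
    finally show "prev_Sup S u = (SUP h\<in>H. prev_Sup S h)" .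
  qed
next
  fix h :: "'a \<Rightarrow> ennreal" and a :: ennreal assume h: "h \<in> LX" and a: "a \<noteq> \<infinity>"
  then show "prev_Sup S (\<lambda>x. a * h x) = a * prev_Sup S h"
    using S LX_cmult[OF h] by (simp add: prev_Sup_def hoare_prev_cmult SUP_mult_left_ennreal subset_eq)
next
  fix h h' :: "'a \<Rightarrow> ennreal" assume h: "h \<in> LX" "h' \<in> LX"
  have "(SUP F\<in>S. F (\<lambda>x. h x + h' x)) \<le> (SUP F\<in>S. F h) + (SUP F\<in>S. F h')"
  proof (rule SUP_least)
    fix F assume "F \<in> S"
    then have "F (\<lambda>x. h x + h' x) \<le> F h + F h'" using S h hoare_prev_add by blast
    also have "\<dots> \<le> (SUP F\<in>S. F h) + (SUP F\<in>S. F h')"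
      using \<open>F \<in> S\<close> by (intro add_mono SUP_upper)
    finally show "F (\<lambda>x. h x + h' x) \<le> (SUP F\<in>S. F h) + (SUP F\<in>S. F h')" .
  qed
  then show "prev_Sup S (\<lambda>x. h x + h' x) \<le> prev_Sup S h + prev_Sup S h'"
    using h LX_add[OF h] by (simp add: prev_Sup_def)
qed (simp add: prev_Sup_def)

lemma prev_Sup_hoare_prev_sub:
  assumes S: "S \<subseteq> hoare_prev_sub"
  shows "prev_Sup S \<in> hoare_prev_sub"
proof -
  have "prev_Sup S (\<lambda>x. 1 + h x) \<le> 1 + prev_Sup S h" if h: "h \<in> LX" for h
  proof -
    have "(SUP F\<in>S. F (\<lambda>x. 1 + h x)) \<le> 1 + (SUP F\<in>S. F h)"
    proof (rule SUP_least)
      fix F assume "F \<in> S"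
      then have "F (\<lambda>x. 1 + h x) \<le> 1 + F h" using S h hoare_prev_sub_one_plus by blast
      also have "\<dots> \<le> 1 + (SUP F\<in>S. F h)" using \<open>F \<in> S\<close> by (intro add_left_mono SUP_upper)
      finally show "F (\<lambda>x. 1 + h x) \<le> 1 + (SUP F\<in>S. F h)" .
    qed
    then show ?thesis using h LX_one_plus[OF h] by (simp add: prev_Sup_def)
  qed
  then show ?thesis
    using prev_Sup_hoare_prev S by (auto simp: hoare_prev_sub_def)
qed

lemma prev_Sup_hoare_prev_norm:
  assumes S: "S \<subseteq> hoare_prev_norm" "S \<noteq> {}"
  shows "prev_Sup S \<in> hoare_prev_norm"
proof -
  have "prev_Sup S (\<lambda>x. 1 + h x) = 1 + prev_Sup S h" if h: "h \<in> LX" for h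
  proof -
    have "(SUP F\<in>S. F (\<lambda>x. 1 + h x)) = (SUP F\<in>S. 1 + F h)"
      using S h by (intro SUP_cong) (auto simp: hoare_prev_norm_one_plus)
    also have "\<dots> = 1 + (SUP F\<in>S. F h)" using S(2) by (simp add: ennreal_SUP_add_right)
    finally show ?thesis using h LX_one_plus[OF h] by (simp add: prev_Sup_def)
  qed
  then show ?thesis
    using prev_Sup_hoare_prev S by (auto simp: hoare_prev_norm_def)
qed

text \<open>The three spaces of previsions are closed under pointwise suprema of nonempty
  families; this makes them dcpos and lets way-below be tested pointwise.\<close>
definition sup_closed :: "'a::order prevision set \<Rightarrow> bool" where
  "sup_closed D \<longleftrightarrow> D \<subseteq> hoare_prev \<and> (\<forall>S. S \<subseteq> D \<and> S \<noteq> {} \<longrightarrow> prev_Sup S \<in> D)"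

lemma sup_closed_hoare_prev: "sup_closed hoare_prev"
  unfolding sup_closed_def using prev_Sup_hoare_prev by blast

lemma sup_closed_hoare_prev_sub: "sup_closed hoare_prev_sub"
  unfolding sup_closed_def using prev_Sup_hoare_prev_sub by (auto simp: hoare_prev_sub_def)

lemma sup_closed_hoare_prev_norm: "sup_closed hoare_prev_norm"
  unfolding sup_closed_def using prev_Sup_hoare_prev_norm by (auto simp: hoare_prev_norm_def)

lemma is_lub_on_prev_Sup:
  assumes "sup_closed D" "S \<subseteq> D" "S \<noteq> {}"
  shows "is_lub_on D prev_le S (prev_Sup S)"
  using assms unfolding is_lub_on_def sup_closed_def prev_le_def prev_Sup_def
  by (auto intro: SUP_upper SUP_least)

lemma lub_le_SUP:
  assumes D: "sup_closed D" and S: "directed_on D prev_le S" "is_lub_on D prev_le S u" and h: "h \<in> LX"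
  shows "u h \<le> (SUP F\<in>S. F h)"
proof -
  have "S \<subseteq> D" "S \<noteq> {}" using S unfolding directed_on_def by auto
  then have "prev_le u (prev_Sup S)"
    using is_lub_on_prev_Sup[OF D] S unfolding is_lub_on_def by blast
  then show ?thesis using h unfolding prev_le_def prev_Sup_def by auto
qed

lemma dcpo_on_sup_closed:
  assumes D: "sup_closed D"
  shows "dcpo_on D prev_le"
  unfolding dcpo_on_def
proof (intro conjI allI impI)
  show "partial_order_on_rel D prev_le" using D partial_order_on_rel_prev_le unfolding sup_closed_def by blast
  fix S assume "directed_on D prev_le S"
  then show "\<exists>u. is_lub_on D prev_le S u" using is_lub_on_prev_Sup[OF D] unfolding directed_on_def by blast
qed

definition row_eval :: "(ennreal \<times> 'a) list \<Rightarrow> ('a \<Rightarrow> ennreal) \<Rightarrow> ennreal" where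
  "row_eval row h = (\<Sum>(a, x)\<leftarrow>row. a * h x)"

definition row_mass :: "(ennreal \<times> 'a) list \<Rightarrow> ennreal" where
  "row_mass row = (\<Sum>(a, x)\<leftarrow>row. a)"

lemma row_eval_simps [simp]:
  "row_eval [] h = 0" "row_eval ((a, x) # row) h = a * h x + row_eval row h"
  by (simp_all add: row_eval_def)

lemma row_mass_simps [simp]: "row_mass [] = 0" "row_mass ((a, x) # row) = a + row_mass row"
  by (simp_all add: row_mass_def)

lemma simple_hoare_eq:
  "simple_hoare rows h = (if h \<in> LX then Max ((\<lambda>row. row_eval row h) ` set rows) else 0)"
  by (simp add: simple_hoare_def row_eval_def)

lemma row_eval_mono: "h \<le> h' \<Longrightarrow> row_eval row h \<le> row_eval row h'"
  by (induction row) (auto simp: le_fun_def intro!: add_mono mult_left_mono)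

lemma row_eval_cmult: "row_eval row (\<lambda>z. c * h z) = c * row_eval row h"
  by (induction row) (auto simp: algebra_simps)

lemma row_eval_add: "row_eval row (\<lambda>z. h z + h' z) = row_eval row h + row_eval row h'"
  by (induction row) (auto simp: algebra_simps)

lemma row_eval_one_plus: "row_eval row (\<lambda>z. 1 + h z) = row_mass row + row_eval row h"
  by (induction row) (auto simp: algebra_simps)

lemma row_eval_SUP:
  assumes H: "H \<noteq> {}" and directed: "\<And>h1 h2. h1 \<in> H \<Longrightarrow> h2 \<in> H \<Longrightarrow> \<exists>h3\<in>H. h1 \<le> h3 \<and> h2 \<le> h3"
  shows "row_eval row (\<lambda>z. SUP h\<in>H. h z) = (SUP h\<in>H. row_eval row h)"
proof (induction row)
  case (Cons p row)
  obtain a x where p: "p = (a, x)" by (cases p)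
  have "row_eval (p # row) (\<lambda>z. SUP h\<in>H. h z) = (SUP h\<in>H. a * h x) + (SUP h\<in>H. row_eval row h)"
    using Cons by (simp add: p SUP_mult_left_ennreal)
  also have "\<dots> = (SUP h\<in>H. a * h x + row_eval row h)"
  proof (rule SUP_add_directed_ennreal[symmetric])
    fix i j assume "i \<in> H" "j \<in> H"
    then obtain k where k: "k \<in> H" "i \<le> k" "j \<le> k" using directed by blast
    then have "a * i x \<le> a * k x" "row_eval row j \<le> row_eval row k"
      by (auto simp: le_fun_def intro: mult_left_mono row_eval_mono)
    then show "\<exists>k\<in>H. a * i x + row_eval row j \<le> a * k x + row_eval row k" using k by (meson add_mono)
  qed
  finally show ?case by (simp add: p)
qed (use H in simp)

lemma simple_hoare_hoare_prev:
  fixes rows :: "(ennreal \<times> 'a::order) list list"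
  assumes rows: "rows \<noteq> []"
  shows "simple_hoare rows \<in> hoare_prev"
proof -
  let ?M = "\<lambda>h. Max ((\<lambda>row. row_eval row h) ` set rows)"
  have fin: "finite ((\<lambda>row. row_eval row h) ` set rows)" "(\<lambda>row. row_eval row h) ` set rows \<noteq> {}" for h
    using rows by auto
  have M_mono: "?M h \<le> ?M h'" if "h \<le> h'" for h h'
    using fin that by (auto intro: order_trans[OF row_eval_mono Max_ge])
  have M_lub: "?M u = (SUP h\<in>H. ?M h)" if H: "directed_on LX (\<le>) H" "is_lub_on LX (\<le>) H u" for H u
  proof (rule antisym)
    have HL: "H \<subseteq> LX" "H \<noteq> {}" using H by (auto simp: directed_on_def)
    have "u = (\<lambda>z. SUP h\<in>H. h z)" using is_lub_on_LX_eq HL H by blast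
    then have "row_eval row u = (SUP h\<in>H. row_eval row h)" for row
      using row_eval_SUP[OF HL(2)] H unfolding directed_on_def by blast
    then show "?M u \<le> (SUP h\<in>H. ?M h)"
      using fin by (auto intro!: SUP_mono Max_ge)
    show "(SUP h\<in>H. ?M h) \<le> ?M u"
      using H M_mono unfolding is_lub_on_def by (blast intro: SUP_least)
  qed
  show ?thesis
    unfolding hoare_prev_def scott_cont_on_def
  proof (intro CollectI conjI ballI allI impI)
    fix h h' :: "'a \<Rightarrow> ennreal" assume "h \<in> LX" "h' \<in> LX" "h \<le> h'"
    then show "simple_hoare rows h \<le> simple_hoare rows h'" using M_mono by (simp add: simple_hoare_eq)
  next
    fix H and u :: "'a \<Rightarrow> ennreal" assume H: "directed_on LX (\<le>) H \<and> is_lub_on LX (\<le>) H u"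
    then have "H \<subseteq> LX" "u \<in> LX" by (auto simp: directed_on_def is_lub_on_def)
    then have "(SUP h\<in>H. simple_hoare rows h) = (SUP h\<in>H. ?M h)"
      by (intro SUP_cong) (auto simp: simple_hoare_eq)
    then show "simple_hoare rows u = (SUP h\<in>H. simple_hoare rows h)"
      using M_lub H \<open>u \<in> LX\<close> by (simp add: simple_hoare_eq)
  next
    fix h :: "'a \<Rightarrow> ennreal" and c :: ennreal assume h: "h \<in> LX"
    have "?M (\<lambda>x. c * h x) = Max ((*) c ` (\<lambda>row. row_eval row h) ` set rows)"
      by (simp add: row_eval_cmult image_image)
    also have "\<dots> = c * ?M h"
      using fin by (intro mono_Max_commute[symmetric]) (auto simp: mono_def intro: mult_left_mono)
    finally show "simple_hoare rows (\<lambda>x. c * h x) = c * simple_hoare rows h"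
      using h LX_cmult[OF h] by (simp add: simple_hoare_eq)
  next
    fix h h' :: "'a \<Rightarrow> ennreal" assume h: "h \<in> LX" "h' \<in> LX"
    have "?M (\<lambda>x. h x + h' x) \<le> ?M h + ?M h'"
      using fin by (subst Max_le_iff) (auto simp: row_eval_add intro!: add_mono Max_ge)
    then show "simple_hoare rows (\<lambda>x. h x + h' x) \<le> simple_hoare rows h + simple_hoare rows h'"
      using h LX_add[OF h] by (simp add: simple_hoare_eq)
  qed (simp add: simple_hoare_eq)
qed

lemma simple_hoare_hoare_prev_sub:
  assumes rows: "rows \<noteq> []" "\<forall>row\<in>set rows. row_mass row \<le> 1"
  shows "simple_hoare rows \<in> hoare_prev_sub"
proof -
  have "Max ((\<lambda>row. row_eval row (\<lambda>x. 1 + h x)) ` set rows) \<le> 1 + Max ((\<lambda>row. row_eval row h) ` set rows)" for h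
    using rows by (subst Max_le_iff) (auto simp: row_eval_one_plus intro!: add_mono Max_ge)
  then show ?thesis
    using simple_hoare_hoare_prev[OF rows(1)] by (simp add: hoare_prev_sub_def simple_hoare_eq LX_one_plus)
qed

lemma simple_hoare_hoare_prev_norm:
  assumes rows: "rows \<noteq> []" "\<forall>row\<in>set rows. row_mass row = 1"
  shows "simple_hoare rows \<in> hoare_prev_norm"
proof -
  have "Max ((\<lambda>row. row_eval row (\<lambda>x. 1 + h x)) ` set rows) = Max ((+) 1 ` (\<lambda>row. row_eval row h) ` set rows)" for h
    using rows by (simp add: row_eval_one_plus image_image cong: image_cong)
  also have "\<dots> h = 1 + Max ((\<lambda>row. row_eval row h) ` set rows)" for h
    using rows by (intro mono_Max_commute[symmetric]) (auto simp: mono_def)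
  finally show ?thesis
    using simple_hoare_hoare_prev[OF rows(1)] by (simp add: hoare_prev_norm_def simple_hoare_eq LX_one_plus)
qed

lemma simple_hoare_singleton: "simple_hoare [row] h = (if h \<in> LX then row_eval row h else 0)"
  by (simp add: simple_hoare_eq)

lemma simple_hoare_append:
  "rows1 \<noteq> [] \<Longrightarrow> rows2 \<noteq> [] \<Longrightarrow> h \<in> LX \<Longrightarrow>
    simple_hoare (rows1 @ rows2) h = max (simple_hoare rows1 h) (simple_hoare rows2 h)"
  by (simp add: simple_hoare_eq image_Un Max_Un)

definition row_of :: "'a set \<Rightarrow> ('a \<Rightarrow> real) \<Rightarrow> (ennreal \<times> 'a) list" where
  "row_of P a = map (\<lambda>x. (ennreal (a x), x)) (SOME xs. set xs = P \<and> distinct xs)"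

lemma row_of:
  assumes "finite P"
  shows row_eval_row_of: "row_eval (row_of P a) h = (\<Sum>x\<in>P. ennreal (a x) * h x)"
    and row_mass_row_of: "row_mass (row_of P a) = (\<Sum>x\<in>P. ennreal (a x))"
    and finite_coeffs_row_of: "finite_coeffs [row_of P a]"
proof -
  let ?xs = "SOME xs. set xs = P \<and> distinct xs"
  have xs: "set ?xs = P" "distinct ?xs"
    using someI_ex[OF finite_distinct_list[OF assms]] by blast+
  have "row_eval (map (\<lambda>x. (f x, x)) ys) h = (\<Sum>x\<leftarrow>ys. f x * h x)"
    "row_mass (map (\<lambda>x. (f x, x)) ys) = (\<Sum>x\<leftarrow>ys. f x)" for f ys
    by (induction ys) simp_all
  then show "row_eval (row_of P a) h = (\<Sum>x\<in>P. ennreal (a x) * h x)"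
    "row_mass (row_of P a) = (\<Sum>x\<in>P. ennreal (a x))"
    unfolding row_of_def using xs by (simp_all add: sum_list_distinct_conv_sum_set)
  show "finite_coeffs [row_of P a]" by (auto simp: finite_coeffs_def row_of_def)
qed

definition step_funs_below :: "('a::order \<Rightarrow> ennreal) \<Rightarrow> ('a \<Rightarrow> ennreal) set" where
  "step_funs_below h = {step_fun P (\<lambda>x. ennreal (c x)) | P c.
     finite P \<and> (\<forall>x\<in>P. 0 \<le> c x \<and> ennreal (c x) \<le> h x)}"

lemma step_funs_below_directed:
  assumes "g1 \<in> step_funs_below h" "g2 \<in> step_funs_below h"
  shows "\<exists>g3\<in>step_funs_below h. g1 \<le> g3 \<and> g2 \<le> g3"
proof -
  obtain P1 c1 where 1: "g1 = step_fun P1 (\<lambda>x. ennreal (c1 x))" "finite P1"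
    "\<forall>x\<in>P1. 0 \<le> c1 x \<and> ennreal (c1 x) \<le> h x"
    using assms(1) unfolding step_funs_below_def by blast
  obtain P2 c2 where 2: "g2 = step_fun P2 (\<lambda>x. ennreal (c2 x))" "finite P2"
    "\<forall>x\<in>P2. 0 \<le> c2 x \<and> ennreal (c2 x) \<le> h x"
    using assms(2) unfolding step_funs_below_def by blast
  define c where "c x = max (if x \<in> P1 then c1 x else 0) (if x \<in> P2 then c2 x else 0)" for x
  have "\<forall>x\<in>P1 \<union> P2. 0 \<le> c x \<and> ennreal (c x) \<le> h x"
    using 1 2 by (auto simp: c_def max_def)
  then have "step_fun (P1 \<union> P2) (\<lambda>x. ennreal (c x)) \<in> step_funs_below h"
    unfolding step_funs_below_def using 1 2 by blast
  moreover have "g1 \<le> step_fun (P1 \<union> P2) (\<lambda>x. ennreal (c x))" "g2 \<le> step_fun (P1 \<union> P2) (\<lambda>x. ennreal (c x))"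
    unfolding 1 2 step_fun_def le_fun_def by (intro allI SUP_mono; force simp: c_def intro: ennreal_leI)+
  ultimately show ?thesis by blast
qed

lemma SUP_step_funs_below:
  assumes C: "continuous_dcpo_on (UNIV :: 'a::order set) (\<le>)" and h: "h \<in> LX"
  shows "(\<lambda>z. SUP g\<in>step_funs_below h. g z) = (h :: 'a \<Rightarrow> ennreal)"
proof (rule ext, rule antisym)
  fix z
  show "(SUP g\<in>step_funs_below h. g z) \<le> h z"
    using step_fun_le[OF h] unfolding step_funs_below_def by (auto simp: le_fun_def intro!: SUP_least)
  have "h z = (SUP x\<in>{y. y \<lless> z}. h x)" using LX_lub[OF h continuous_dcpo_way_below[OF C]] .
  also have "\<dots> \<le> (SUP g\<in>step_funs_below h. g z)"
  proof (rule SUP_least)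
    fix x assume x: "x \<in> {y. y \<lless> z}"
    show "h x \<le> (SUP g\<in>step_funs_below h. g z)"
    proof (rule dense_le)
      fix y assume y: "y < h x"
      then obtain q where q: "0 \<le> q" "y = ennreal q" by (cases y) auto
      have "step_fun {x} (\<lambda>_. ennreal q) \<in> step_funs_below h"
        unfolding step_funs_below_def using q y by (intro CollectI exI[of _ "{x}"] exI[of _ "\<lambda>_. q"]) auto
      moreover have "step_fun {x} (\<lambda>_. ennreal q) z = ennreal q"
        using x by (simp add: step_fun_def)
      ultimately show "y \<le> (SUP g\<in>step_funs_below h. g z)" using q by (metis SUP_upper)
    qed
  qed
  finally show "h z \<le> (SUP g\<in>step_funs_below h. g z)" .
qed

lemma hoare_prev_step_fun_approx:
  assumes C: "continuous_dcpo_on (UNIV :: 'a::order set) (\<le>)" and F: "F \<in> hoare_prev"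
    and h: "h \<in> LX" and r: "r < F h"
  obtains P c where "finite (P::'a set)" "\<forall>x\<in>P. 0 \<le> c x \<and> ennreal (c x) \<le> h x"
    "r < F (step_fun P (\<lambda>x. ennreal (c x)))"
proof -
  have "step_funs_below h \<subseteq> LX" "step_funs_below h \<noteq> {}"
    using step_fun_LX[OF C] unfolding step_funs_below_def by blast+
  from hoare_prev_SUP[OF F this step_funs_below_directed]
  have "F h = (SUP g\<in>step_funs_below h. F g)" by (simp only: SUP_step_funs_below[OF C h])
  with r obtain g where "g \<in> step_funs_below h" "r < F g" by (auto simp: less_SUP_iff)
  then show ?thesis using that unfolding step_funs_below_def by blast
qed

lemma hoare_prev_step_fun_le_sum:
  assumes C: "continuous_dcpo_on (UNIV :: 'a::order set) (\<le>)" and F: "F \<in> hoare_prev"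
    and P: "finite (P::'a set)"
  shows "F (step_fun P c) \<le> (\<Sum>x\<in>P. F (step_fun {x} c))"
  using P
proof (induction P rule: finite_induct)
  case empty
  then show ?case using hoare_prev_zero[OF F] by (simp add: step_fun_empty)
next
  case (insert x Q)
  have "F (step_fun (insert x Q) c) \<le> F (\<lambda>z. step_fun {x} c z + step_fun Q c z)"
    by (intro hoare_prev_mono[OF F] step_fun_LX[OF C] LX_add step_fun_insert_le)
  also have "\<dots> \<le> F (step_fun {x} c) + F (step_fun Q c)"
    by (intro hoare_prev_add[OF F] step_fun_LX[OF C])
  also have "\<dots> \<le> F (step_fun {x} c) + (\<Sum>x\<in>Q. F (step_fun {x} c))"
    using insert.IH by (intro add_mono) auto
  finally show ?case using insert.hyps by simp
qed

lemma ennreal_top_if_unbounded: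
  fixes y :: ennreal
  assumes a: "0 < a" and bound: "\<And>n::nat. ennreal (a * real n) \<le> y"
  shows "y = \<infinity>"
proof (rule ccontr)
  assume "y \<noteq> \<infinity>"
  then obtain R where R: "0 \<le> R" "y = ennreal R" by (cases y) auto
  obtain n :: nat where "R / a < real n" using reals_Archimedean2 by blast
  then have "R < a * real n" using a by (simp add: divide_less_eq mult.commute)
  moreover have "a * real n \<le> R" using bound[of n] R a by simp
  ultimately show False by simp
qed

definition step_dominates :: "'a::order prevision \<Rightarrow> 'a set \<Rightarrow> ('a \<Rightarrow> real) \<Rightarrow> bool" where
  "step_dominates F P a \<longleftrightarrow>
     (\<forall>c. (\<forall>x\<in>P. 0 \<le> c x) \<longrightarrow> ennreal (\<Sum>x\<in>P. a x * c x) \<le> F (step_fun P (\<lambda>x. ennreal (c x))))"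

text \<open>A linear functional dominated by \<open>F\<close> on the step functions over \<open>P\<close> is dominated by
  \<open>F\<close> everywhere, because every \<open>h \<in> LX\<close> lies above the step function with heights \<open>h\<close>.\<close>
lemma hoare_prev_ge_linear:
  assumes C: "continuous_dcpo_on (UNIV :: 'a::order set) (\<le>)" and F: "F \<in> hoare_prev"
    and P: "finite (P::'a set)" and a: "\<forall>x\<in>P. 0 \<le> a x" and dom: "step_dominates F P a"
    and h: "h \<in> LX"
  shows "(\<Sum>x\<in>P. ennreal (a x) * h x) \<le> F h"
proof (cases "\<exists>x\<in>P. 0 < a x \<and> h x = \<infinity>")
  case True
  then obtain x where x: "x \<in> P" "0 < a x" "h x = \<infinity>" by blast
  have "ennreal (a x * real n) \<le> F h" for n :: nat
  proof -
    define c where "c y = (if y = x then real n else 0)" for y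
    have "(\<Sum>y\<in>P. a y * c y) = a x * real n"
      using P x(1) by (simp add: c_def if_distrib cong: if_cong)
    then have "ennreal (a x * real n) \<le> F (step_fun P (\<lambda>y. ennreal (c y)))"
      using dom unfolding step_dominates_def by (metis c_def of_nat_0_le_iff order_refl)
    also have "\<dots> \<le> F h"
      using x by (intro hoare_prev_mono[OF F] step_fun_LX[OF C] h step_fun_le[OF h]) (auto simp: c_def)
    finally show ?thesis .
  qed
  then have "F h = \<infinity>" by (rule ennreal_top_if_unbounded[OF x(2)])
  then show ?thesis by simp
next
  case False
  define c where "c y = enn2real (h y)" for y
  have "ennreal (a x) * h x = ennreal (a x * c x)" if "x \<in> P" for x
  proof (cases "h x = \<infinity>")
    case True
    then have "a x = 0" using False a that by force
    then show ?thesis by simp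
  qed (use a that in \<open>simp add: c_def ennreal_mult less_top\<close>)
  then have "(\<Sum>x\<in>P. ennreal (a x) * h x) = ennreal (\<Sum>x\<in>P. a x * c x)"
    using a by (simp add: c_def sum_nonneg)
  also have "\<dots> \<le> F (step_fun P (\<lambda>x. ennreal (c x)))" using dom by (simp add: c_def step_dominates_def)
  also have "\<dots> \<le> F h"
    by (intro hoare_prev_mono[OF F] step_fun_LX[OF C] h step_fun_le[OF h])
      (simp add: c_def ennreal_enn2real_if)
  finally show ?thesis .
qed

lemma step_dominates_subset:
  assumes dom: "step_dominates F P a" and P: "finite P" and Q: "Q \<subseteq> P"
  shows "step_dominates F Q a"
  unfolding step_dominates_def
proof (intro allI impI)
  fix c :: "'a \<Rightarrow> real" assume c: "\<forall>x\<in>Q. 0 \<le> c x"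
  define c' where "c' x = (if x \<in> Q then c x else 0)" for x
  have "(\<Sum>x\<in>Q. a x * c x) = (\<Sum>x\<in>P. a x * c' x)"
    using P Q by (intro sum.mono_neutral_cong_left) (auto simp: c'_def)
  moreover have "step_fun P (\<lambda>x. ennreal (c' x)) = step_fun Q (\<lambda>x. ennreal (c x))"
    using Q by (subst step_fun_eq_on_support[OF Q]) (auto simp: c'_def intro: step_fun_cong)
  moreover have "\<forall>x\<in>P. 0 \<le> c' x" using c by (simp add: c'_def)
  ultimately show "ennreal (\<Sum>x\<in>Q. a x * c x) \<le> F (step_fun Q (\<lambda>x. ennreal (c x)))"
    using dom unfolding step_dominates_def by auto
qed

lemma step_dominates_singleton_infinite:
  assumes C: "continuous_dcpo_on (UNIV :: 'a::order set) (\<le>)" and F: "F \<in> hoare_prev"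
    and inf: "F (step_fun {x::'a} (\<lambda>_. 1)) = \<infinity>"
  shows "step_dominates F {x} b"
  unfolding step_dominates_def
proof (intro allI impI)
  fix c :: "'a \<Rightarrow> real" assume c: "\<forall>y\<in>{x}. 0 \<le> c y"
  show "ennreal (\<Sum>y\<in>{x}. b y * c y) \<le> F (step_fun {x} (\<lambda>y. ennreal (c y)))"
  proof (cases "c x = 0")
    case False
    then have "F (step_fun {x} (\<lambda>y. ennreal (c y))) = \<infinity>"
      using c inf hoare_prev_cmult[OF F step_fun_LX[OF C]]
      by (subst step_fun_singleton) (simp add: ennreal_mult_top)
    then show ?thesis by simp
  qed simp
qed

lemma sublinear_on_step_functional:
  assumes C: "continuous_dcpo_on (UNIV :: 'a::order set) (\<le>)" and F: "F \<in> hoare_prev"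
    and P: "finite (P::'a set)" and fin: "\<forall>x\<in>P. F (step_fun {x} (\<lambda>_. 1)) < \<infinity>"
  defines "\<Psi> \<equiv> \<lambda>c. enn2real (F (step_fun P (\<lambda>x. ennreal (c x))))"
  shows "\<And>c. F (step_fun P (\<lambda>x. ennreal (c x))) = ennreal (\<Psi> c)"
    and "sublinear_on P \<Psi>"
proof -
  note LX = step_fun_LX[OF C] and mono = hoare_prev_mono[OF F]
  have finite: "F (step_fun P (\<lambda>x. ennreal (c x))) < \<infinity>" for c
  proof -
    have "F (step_fun P (\<lambda>x. ennreal (c x))) \<le> (\<Sum>x\<in>P. F (step_fun {x} (\<lambda>x. ennreal (c x))))"
      by (rule hoare_prev_step_fun_le_sum[OF C F P])
    also have "\<dots> = (\<Sum>x\<in>P. ennreal (c x) * F (step_fun {x} (\<lambda>_. 1)))"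
      by (subst step_fun_singleton) (simp add: hoare_prev_cmult[OF F LX])
    also have "\<dots> < \<infinity>" using P fin by (simp add: ennreal_mult_less_top)
    finally show ?thesis .
  qed
  then show eq: "F (step_fun P (\<lambda>x. ennreal (c x))) = ennreal (\<Psi> c)" for c
    by (simp add: \<Psi>_def)
  have Psi_nonneg: "0 \<le> \<Psi> c" for c by (simp add: \<Psi>_def)
  show "sublinear_on P \<Psi>"
  proof (rule sublinear_onI)
    fix c c' :: "'a \<Rightarrow> real"
    show "\<Psi> c = \<Psi> c'" if "\<And>x. x \<in> P \<Longrightarrow> c x = c' x"
      using that unfolding \<Psi>_def by (simp cong: step_fun_cong)
    show "\<Psi> c \<le> \<Psi> c'" if "\<And>x. x \<in> P \<Longrightarrow> 0 \<le> c x \<and> c x \<le> c' x"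
      unfolding \<Psi>_def using that finite
      by (intro enn2real_mono mono LX step_fun_mono ennreal_leI) auto
    assume cc': "\<And>x. x \<in> P \<Longrightarrow> 0 \<le> c x \<and> 0 \<le> c' x"
    have "step_fun P (\<lambda>x. ennreal (c x + c' x)) = step_fun P (\<lambda>x. ennreal (c x) + ennreal (c' x))"
      using cc' by (intro step_fun_cong) auto
    then have "F (step_fun P (\<lambda>x. ennreal (c x + c' x)))
        \<le> F (\<lambda>z. step_fun P (\<lambda>x. ennreal (c x)) z + step_fun P (\<lambda>x. ennreal (c' x)) z)"
      by (auto intro!: mono LX LX_add step_fun_add_le)
    also have "\<dots> \<le> F (step_fun P (\<lambda>x. ennreal (c x))) + F (step_fun P (\<lambda>x. ennreal (c' x)))"
      by (intro hoare_prev_add[OF F] LX)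
    finally have "ennreal (\<Psi> (\<lambda>y. c y + c' y)) \<le> ennreal (\<Psi> c + \<Psi> c')"
      using eq Psi_nonneg by simp
    then show "\<Psi> (\<lambda>y. c y + c' y) \<le> \<Psi> c + \<Psi> c'"
      by (subst (asm) ennreal_le_iff) (simp_all add: Psi_nonneg add_nonneg_nonneg)
  next
    fix c :: "'a \<Rightarrow> real" and t :: real assume c: "\<And>x. x \<in> P \<Longrightarrow> 0 \<le> c x" and t: "0 \<le> t"
    have "step_fun P (\<lambda>x. ennreal (t * c x)) = (\<lambda>z. ennreal t * step_fun P (\<lambda>x. ennreal (c x)) z)"
      using c t by (subst step_fun_cmult[symmetric]) (auto simp: ennreal_mult' intro: step_fun_cong)
    then show "\<Psi> (\<lambda>y. t * c y) = t * \<Psi> c"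
      using t unfolding \<Psi>_def by (simp add: hoare_prev_cmult[OF F LX] enn2real_mult)
  qed
qed

lemma step_functional_strict_minorant:
  assumes C: "continuous_dcpo_on (UNIV :: 'a::order set) (\<le>)" and F: "F \<in> hoare_prev"
    and P: "finite (P::'a set)" and fin: "\<forall>x\<in>P. F (step_fun {x} (\<lambda>_. 1)) < \<infinity>"
    and c0: "\<forall>x\<in>P. 0 \<le> c0 x" and r: "r < F (step_fun P (\<lambda>x. ennreal (c0 x)))"
  obtains Q a b where "Q \<subseteq> P" "\<forall>x\<in>Q. 0 \<le> a x \<and> a x < b x" "step_dominates F Q b"
    "r < (\<Sum>x\<in>Q. ennreal (a x * c0 x))"
proof -
  define \<Psi> where "\<Psi> c = enn2real (F (step_fun P (\<lambda>x. ennreal (c x))))" for c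
  note \<Psi> = sublinear_on_step_functional[OF C F P fin, folded \<Psi>_def]
  obtain b where b_nonneg: "\<forall>x\<in>P. 0 \<le> b x"
    and b_le: "\<forall>c. (\<forall>x\<in>P. 0 \<le> c x) \<longrightarrow> (\<Sum>x\<in>P. b x * c x) \<le> \<Psi> c"
    and b_eq: "(\<Sum>x\<in>P. b x * c0 x) = \<Psi> c0"
    using sublinear_on_linear_minorant[OF P \<Psi>(2) c0] by blast
  have "step_dominates F P b"
    unfolding step_dominates_def using b_le by (auto simp: \<Psi>(1) intro: ennreal_leI)
  define Q where "Q = {x\<in>P. 0 < b x}"
  have Q: "Q \<subseteq> P" by (auto simp: Q_def)
  have "r < ennreal (\<Psi> c0)" using r by (simp only: \<Psi>(1))
  then obtain r' where r': "0 \<le> r'" "r = ennreal r'" "r' < \<Psi> c0"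
    by (cases r) (auto simp: ennreal_less_iff)
  text \<open>Shrinking \<open>b\<close> by a factor \<open>\<theta> < 1\<close> keeps the value at \<open>c0\<close> above \<open>r\<close>.\<close>
  define \<theta> where "\<theta> = (r' + \<Psi> c0) / (2 * \<Psi> c0)"
  have \<theta>: "0 \<le> \<theta>" "\<theta> < 1" "r' < \<theta> * \<Psi> c0" using r' by (auto simp: \<theta>_def field_simps)
  have "\<forall>x\<in>Q. 0 \<le> \<theta> * b x \<and> \<theta> * b x < b x" using \<theta> by (auto simp: Q_def)
  moreover have "step_dominates F Q b" by (rule step_dominates_subset[OF \<open>step_dominates F P b\<close> P Q])
  moreover have "r < (\<Sum>x\<in>Q. ennreal (\<theta> * b x * c0 x))"
  proof -
    have "(\<Sum>x\<in>Q. b x * c0 x) = \<Psi> c0"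
      using P b_nonneg b_eq by (subst b_eq[symmetric], intro sum.mono_neutral_left) (auto simp: Q_def)
    then have "(\<Sum>x\<in>Q. \<theta> * b x * c0 x) = \<theta> * \<Psi> c0" by (simp add: sum_distrib_left[symmetric] mult.assoc)
    moreover have "\<forall>x\<in>Q. 0 \<le> \<theta> * b x * c0 x" using \<theta> Q b_nonneg c0 by auto
    ultimately show ?thesis using r' \<theta> by (simp add: sum_ennreal[symmetric] ennreal_less_iff)
  qed
  ultimately show ?thesis by (rule that[OF Q])
qed

lemma hoare_prev_linear_approx:
  assumes C: "continuous_dcpo_on (UNIV :: 'a::order set) (\<le>)" and F: "F \<in> hoare_prev"
    and h: "h \<in> LX" and r: "r < F h"
  obtains P a b where "finite (P::'a set)" "\<forall>x\<in>P. 0 \<le> a x \<and> a x < b x" "step_dominates F P b"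
    "r < (\<Sum>x\<in>P. ennreal (a x) * h x)"
proof -
  obtain P0 c0 where P0: "finite (P0::'a set)" and c0: "\<forall>x\<in>P0. 0 \<le> c0 x \<and> ennreal (c0 x) \<le> h x"
    and r_c0: "r < F (step_fun P0 (\<lambda>x. ennreal (c0 x)))"
    by (rule hoare_prev_step_fun_approx[OF C F h r])
  define P where "P = {x\<in>P0. 0 < c0 x}"
  have P: "finite P" "P \<subseteq> P0" using P0 by (auto simp: P_def)
  have "step_fun P0 (\<lambda>x. ennreal (c0 x)) = step_fun P (\<lambda>x. ennreal (c0 x))"
    by (rule step_fun_eq_on_support[OF P(2)]) (use c0 in \<open>auto simp: P_def\<close>)
  then have r_P: "r < F (step_fun P (\<lambda>x. ennreal (c0 x)))" using r_c0 by simp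
  obtain r' where r': "0 \<le> r'" "r = ennreal r'" using r by (cases r) auto
  show ?thesis
  proof (cases "\<exists>x\<in>P. F (step_fun {x} (\<lambda>_. 1)) = \<infinity>")
    case True
    then obtain x where x: "x \<in> P" "F (step_fun {x} (\<lambda>_. 1)) = \<infinity>" by blast
    have cx: "0 < c0 x" "ennreal (c0 x) \<le> h x" using x c0 P by (auto simp: P_def)
    define a where "a = (\<lambda>_::'a. (r' + 1) / c0 x)"
    have "r < ennreal (r' + 1)" using r' by (simp add: ennreal_less_iff)
    also have "\<dots> = ennreal (a x) * ennreal (c0 x)"
      using cx r' by (simp add: a_def ennreal_mult[symmetric])
    also have "\<dots> \<le> ennreal (a x) * h x" using cx by (intro mult_left_mono) auto
    finally have "r < (\<Sum>y\<in>{x}. ennreal (a y) * h y)" by simp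
    moreover have "\<forall>y\<in>{x}. 0 \<le> a y \<and> a y < a y + 1" using cx r' by (simp add: a_def)
    ultimately show ?thesis
      by (intro that[of "{x}" a "\<lambda>y. a y + 1"] step_dominates_singleton_infinite[OF C F x(2)]) auto
  next
    case False
    then have fin: "\<forall>x\<in>P. F (step_fun {x} (\<lambda>_. 1)) < \<infinity>" by (simp add: less_top)
    have "\<forall>x\<in>P. 0 \<le> c0 x" using c0 P(2) by auto
    then obtain Q a b where Q: "Q \<subseteq> P" "\<forall>x\<in>Q. 0 \<le> a x \<and> a x < b x" "step_dominates F Q b"
      and r_Q: "r < (\<Sum>x\<in>Q. ennreal (a x * c0 x))"
      by (rule step_functional_strict_minorant[OF C F P(1) fin _ r_P])
    have "(\<Sum>x\<in>Q. ennreal (a x * c0 x)) \<le> (\<Sum>x\<in>Q. ennreal (a x) * h x)"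
      using Q c0 P(2) by (intro sum_mono) (auto simp: ennreal_mult' intro!: mult_left_mono)
    with r_Q have "r < (\<Sum>x\<in>Q. ennreal (a x) * h x)" by (rule order_less_le_trans)
    moreover have "finite Q" using Q(1) P(1) by (rule finite_subset)
    ultimately show ?thesis using Q by (intro that[of Q a b])
  qed
qed

lemma way_below_on_if_step_dominates:
  assumes C: "continuous_dcpo_on (UNIV :: 'a::order set) (\<le>)" and D: "sup_closed D"
    and F: "F \<in> D" and s: "s \<in> D" and P: "finite (P::'a set)"
    and ab: "\<forall>x\<in>P. 0 \<le> a x \<and> a x < b x" and F_dom: "step_dominates F P b"
    and s_le: "\<forall>G\<in>D. step_dominates G P a \<longrightarrow> prev_le s G"
  shows "way_below_on D prev_le s F"
  unfolding way_below_on_def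
proof (intro conjI allI impI)
  fix S u assume Su: "directed_on D prev_le S \<and> is_lub_on D prev_le S u \<and> prev_le F u"
  have S: "S \<subseteq> hoare_prev" "S \<noteq> {}" using Su D unfolding directed_on_def sup_closed_def by auto
  note LX = step_fun_LX[OF C]
  define \<psi> where "\<psi> G c = G (step_fun P (\<lambda>x. ennreal (c x)))" for G :: "'a prevision" and c
  have "\<exists>G\<in>S. \<forall>c. (\<forall>x\<in>P. 0 \<le> c x) \<longrightarrow> ennreal (\<Sum>x\<in>P. a x * c x) \<le> \<psi> G c"
  proof (rule linear_below_directed_SUP[OF P ab S(2)])
    show "\<forall>G1\<in>S. \<forall>G2\<in>S. \<exists>G3\<in>S. (\<forall>c. \<psi> G1 c \<le> \<psi> G3 c) \<and> (\<forall>c. \<psi> G2 c \<le> \<psi> G3 c)"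
      using Su LX unfolding directed_on_def \<psi>_def prev_le_def by meson
    show "\<forall>G\<in>S. \<forall>c c'. (\<forall>x\<in>P. 0 \<le> c x \<and> c x \<le> c' x) \<longrightarrow> \<psi> G c \<le> \<psi> G c'"
    proof (intro ballI allI impI)
      fix G and c c' :: "'a \<Rightarrow> real" assume "G \<in> S" and cc': "\<forall>x\<in>P. 0 \<le> c x \<and> c x \<le> c' x"
      then have "G \<in> hoare_prev" using S by blast
      then show "\<psi> G c \<le> \<psi> G c'"
        unfolding \<psi>_def
        by (rule hoare_prev_mono[OF _ LX LX step_fun_mono]) (use cc' in \<open>auto intro: ennreal_leI\<close>)
    qed
    show "\<forall>G\<in>S. \<forall>c t. 0 < t \<longrightarrow> \<psi> G (\<lambda>x. t * c x) = ennreal t * \<psi> G c"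
    proof (intro ballI allI impI)
      fix G c and t :: real assume "G \<in> S" "0 < t"
      then show "\<psi> G (\<lambda>x. t * c x) = ennreal t * \<psi> G c"
        using S hoare_prev_cmult[OF _ LX] unfolding \<psi>_def
        by (subst step_fun_cong[where c' = "\<lambda>x. ennreal t * ennreal (c x)"])
          (auto simp: ennreal_mult' step_fun_cmult)
    qed
    show "\<forall>c. (\<forall>x\<in>P. 0 \<le> c x) \<longrightarrow> ennreal (\<Sum>x\<in>P. b x * c x) \<le> (SUP G\<in>S. \<psi> G c)"
    proof (intro allI impI)
      fix c :: "'a \<Rightarrow> real" assume "\<forall>x\<in>P. 0 \<le> c x"
      then have "ennreal (\<Sum>x\<in>P. b x * c x) \<le> F (step_fun P (\<lambda>x. ennreal (c x)))"
        using F_dom unfolding step_dominates_def by blast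
      also have "\<dots> \<le> u (step_fun P (\<lambda>x. ennreal (c x)))" using Su LX unfolding prev_le_def by blast
      also have "\<dots> \<le> (SUP G\<in>S. G (step_fun P (\<lambda>x. ennreal (c x))))"
        using lub_le_SUP[OF D _ _ LX] Su by blast
      finally show "ennreal (\<Sum>x\<in>P. b x * c x) \<le> (SUP G\<in>S. \<psi> G c)" unfolding \<psi>_def .
    qed
  qed
  then show "\<exists>G\<in>S. prev_le s G"
    using s_le Su unfolding \<psi>_def step_dominates_def directed_on_def by blast
qed (use F s in auto)

lemma hoare_prev_norm_add_const:
  assumes F: "F \<in> hoare_prev_norm" and k: "k \<in> LX" and m: "0 \<le> m"
  shows "F (\<lambda>z. ennreal m + k z) = ennreal m + F k"
proof (cases "m = 0")
  case False
  then have m: "0 < m" using m by simp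
  define k' where "k' z = ennreal (1 / m) * k z" for z
  have k': "k' \<in> LX" unfolding k'_def using LX_cmult[OF k] .
  have mm: "ennreal m * ennreal (1 / m) = 1" using m by (simp add: ennreal_mult[symmetric])
  have "(\<lambda>z. ennreal m + k z) = (\<lambda>z. ennreal m * (1 + k' z))"
    using mm by (simp add: k'_def distrib_left mult.assoc[symmetric])
  then have "F (\<lambda>z. ennreal m + k z) = ennreal m * (1 + F k')"
    using hoare_prev_cmult[OF hoare_prev_normD[OF F] LX_one_plus[OF k']]
      hoare_prev_norm_one_plus[OF F k'] by simp
  also have "F k' = ennreal (1 / m) * F k"
    unfolding k'_def using hoare_prev_cmult[OF hoare_prev_normD[OF F] k] by simp
  finally show ?thesis using mm by (simp add: distrib_left mult.assoc[symmetric])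
qed simp

lemma hoare_prev_norm_const:
  assumes "F \<in> hoare_prev_norm" "0 \<le> m"
  shows "F (\<lambda>_. ennreal m) = ennreal m"
  using hoare_prev_norm_add_const[OF assms(1) LX_const[of 0] assms(2)]
    hoare_prev_zero[OF hoare_prev_normD[OF assms(1)]] by simp

lemma hoare_prev_norm_ge_bot:
  assumes F: "F \<in> hoare_prev_norm" and x\<^sub>0: "\<forall>x. x\<^sub>0 \<le> x" and h: "h \<in> LX"
  shows "h x\<^sub>0 \<le> F h"
proof (cases "h x\<^sub>0 = \<infinity>")
  case True
  then have "h = (\<lambda>_. \<infinity>)" using LX_mono[OF h] x\<^sub>0 by (metis infinity_ennreal_def top_unique)
  have "ennreal (1 * real n) \<le> F h" for n :: nat
  proof -
    have "F (\<lambda>_. ennreal (real n)) \<le> F h"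
      by (rule hoare_prev_mono[OF hoare_prev_normD[OF F] LX_const h]) (simp add: \<open>h = _\<close> le_fun_def)
    then show ?thesis using hoare_prev_norm_const[OF F, of "real n"] by simp
  qed
  then have "F h = \<infinity>" by (rule ennreal_top_if_unbounded[OF zero_less_one])
  then show ?thesis by simp
next
  case False
  then obtain m where m: "0 \<le> m" "h x\<^sub>0 = ennreal m" by (cases "h x\<^sub>0") auto
  then have "h x\<^sub>0 = F (\<lambda>_. ennreal m)" using hoare_prev_norm_const[OF F] by simp
  also have "\<dots> \<le> F h"
    using m x\<^sub>0 LX_mono[OF h]
    by (intro hoare_prev_mono[OF hoare_prev_normD[OF F]] LX_const h le_funI) metis
  finally show ?thesis .
qed

text \<open>The normalized analogue of \<open>hoare_prev_ge_linear\<close>: the missing mass \<open>1 - \<Sum>a\<close>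
  is put on \<open>\<bottom>\<close>. Write \<open>h = m + (h - m)\<close> with \<open>m = h \<bottom>\<close>, the least value of \<open>h\<close>.\<close>
lemma hoare_prev_norm_ge_linear:
  assumes C: "continuous_dcpo_on (UNIV :: 'a::order set) (\<le>)" and G: "G \<in> hoare_prev_norm"
    and P: "finite (P::'a set)" and a: "\<forall>x\<in>P. 0 \<le> a x" and sum_a: "(\<Sum>x\<in>P. a x) \<le> 1"
    and x\<^sub>0: "\<forall>x. x\<^sub>0 \<le> x" and dom: "step_dominates G P a" and h: "h \<in> LX"
  shows "ennreal (1 - (\<Sum>x\<in>P. a x)) * h x\<^sub>0 + (\<Sum>x\<in>P. ennreal (a x) * h x) \<le> G h"
proof (cases "h x\<^sub>0 = \<infinity> \<or> (\<exists>x\<in>P. 0 < a x \<and> h x = \<infinity>)")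
  case True
  moreover have "(\<Sum>x\<in>P. ennreal (a x) * h x) \<le> G h"
    by (rule hoare_prev_ge_linear[OF C hoare_prev_normD[OF G] P a dom h])
  moreover have "(\<Sum>x\<in>P. ennreal (a x) * h x) = \<infinity>" if "x \<in> P" "0 < a x" "h x = \<infinity>" for x
  proof -
    have "ennreal (a x) * h x = \<infinity>" using that by (simp add: ennreal_mult_top)
    then show ?thesis using P that(1) by auto
  qed
  ultimately have "G h = \<infinity>"
    using hoare_prev_norm_ge_bot[OF G x\<^sub>0 h] by (auto simp: top_unique)
  then show ?thesis by simp
next
  case False
  then obtain m where m: "0 \<le> m" "h x\<^sub>0 = ennreal m" by (cases "h x\<^sub>0") auto
  have h_ge: "h x\<^sub>0 \<le> h x" for x using LX_mono[OF h] x\<^sub>0 by blast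
  define c where "c x = (if h x = \<infinity> then 0 else enn2real (h x) - m)" for x
  have c: "0 \<le> c x" for x
    using h_ge[of x] m by (cases "h x") (auto simp: c_def)
  have h_eq: "h x = ennreal (m + c x)" if "h x \<noteq> \<infinity>" for x
    using that h_ge[of x] m by (cases "h x") (auto simp: c_def)
  define k where "k = step_fun P (\<lambda>x. ennreal (c x))"
  have k: "k \<in> LX" unfolding k_def by (rule step_fun_LX[OF C])
  have "(\<lambda>z. ennreal m + k z) \<le> h"
  proof (rule le_funI)
    fix z
    have "ennreal m + ennreal (c x) \<le> h z" if "x \<lless> z" for x
    proof (cases "h x = \<infinity>")
      case False
      then have "ennreal m + ennreal (c x) = h x" using h_eq[OF False] m c[of x] by simp
      then show ?thesis using LX_mono[OF h way_below_imp_le[OF that]] by simp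
    qed (use m h_ge[of z] in \<open>simp add: c_def\<close>)
    then have "ennreal m + k z \<le> h z" if "{x\<in>P. x \<lless> z} \<noteq> {}"
      using that unfolding k_def step_fun_def by (auto simp: ennreal_SUP_add_right intro!: SUP_least)
    moreover have "k z = 0" if "{x\<in>P. x \<lless> z} = {}"
      unfolding k_def step_fun_def that by (simp add: bot_ennreal)
    ultimately show "ennreal m + k z \<le> h z" using m h_ge by fastforce
  qed
  then have "G (\<lambda>z. ennreal m + k z) \<le> G h"
    by (rule hoare_prev_mono[OF hoare_prev_normD[OF G] LX_add[OF LX_const k] h])
  moreover have "ennreal (\<Sum>x\<in>P. a x * c x) \<le> G k"
    using dom c unfolding step_dominates_def k_def by blast
  ultimately have main: "ennreal m + ennreal (\<Sum>x\<in>P. a x * c x) \<le> G h"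
    using hoare_prev_norm_add_const[OF G k m(1)] by (metis add_left_mono order_trans)
  have "(\<Sum>x\<in>P. ennreal (a x) * h x) = ennreal (\<Sum>x\<in>P. a x * (m + c x))"
  proof -
    have "ennreal (a x) * h x = ennreal (a x * (m + c x))" if "x \<in> P" for x
    proof (cases "h x = \<infinity>")
      case True
      then have "a x = 0" using False a that by force
      then show ?thesis by simp
    qed (use a that h_eq[of x] m c[of x] in \<open>simp add: ennreal_mult'\<close>)
    then have "(\<Sum>x\<in>P. ennreal (a x) * h x) = (\<Sum>x\<in>P. ennreal (a x * (m + c x)))"
      by (rule sum.cong[OF refl])
    also have "\<dots> = ennreal (\<Sum>x\<in>P. a x * (m + c x))" using a m c by (intro sum_ennreal) auto
    finally show ?thesis .
  qed
  then have "ennreal (1 - (\<Sum>x\<in>P. a x)) * h x\<^sub>0 + (\<Sum>x\<in>P. ennreal (a x) * h x)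
      = ennreal ((1 - (\<Sum>x\<in>P. a x)) * m + (\<Sum>x\<in>P. a x * (m + c x)))"
    using m sum_a a c by (simp add: ennreal_mult sum_nonneg)
  also have "(1 - (\<Sum>x\<in>P. a x)) * m + (\<Sum>x\<in>P. a x * (m + c x)) = m + (\<Sum>x\<in>P. a x * c x)"
    by (simp add: algebra_simps sum.distrib sum_distrib_left sum_distrib_right)
  finally show ?thesis using main m a c by (simp add: sum_nonneg)
qed

lemma hoare_prev_sub_const_one:
  assumes "F \<in> hoare_prev_sub"
  shows "F (\<lambda>_. 1) \<le> 1"
  using hoare_prev_sub_one_plus[OF assms LX_const[of 0]] hoare_prev_zero[OF hoare_prev_subD[OF assms]]
  by simp

lemma step_dominates_sum_le_one:
  assumes C: "continuous_dcpo_on (UNIV :: 'a::order set) (\<le>)" and F: "F \<in> hoare_prev"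
    and one: "F (\<lambda>_. 1) \<le> 1" and dom: "step_dominates F P b"
  shows "(\<Sum>x\<in>(P::'a set). b x) \<le> 1"
proof -
  have "ennreal (\<Sum>x\<in>P. b x * 1) \<le> F (step_fun P (\<lambda>_. ennreal 1))"
    using dom[unfolded step_dominates_def, rule_format, of "\<lambda>_. 1"] by simp
  also have "\<dots> \<le> F (\<lambda>_. 1)"
    by (rule hoare_prev_mono[OF F step_fun_LX[OF C] LX_const step_fun_le[OF LX_const]]) simp
  also note one
  finally show ?thesis by simp
qed

lemma simple_basis_approx:
  fixes F :: "'a::order prevision"
  assumes C: "continuous_dcpo_on (UNIV :: 'a::order set) (\<le>)" and F: "F \<in> hoare_prev"
    and h: "h \<in> LX" and r: "r < F h"
  shows "\<exists>s\<in>simple_basis. way_below_on hoare_prev prev_le s F \<and> r < s h"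
proof -
  obtain P a b where P: "finite (P::'a set)" and ab: "\<forall>x\<in>P. 0 \<le> a x \<and> a x < b x"
    and dom: "step_dominates F P b" and r_a: "r < (\<Sum>x\<in>P. ennreal (a x) * h x)"
    by (rule hoare_prev_linear_approx[OF C F h r])
  define s where "s = simple_hoare [row_of P a]"
  have "s \<in> simple_basis" using finite_coeffs_row_of[OF P] by (auto simp: simple_basis_def s_def)
  moreover have "way_below_on hoare_prev prev_le s F"
  proof (rule way_below_on_if_step_dominates[OF C sup_closed_hoare_prev F _ P ab dom])
    show "s \<in> hoare_prev" unfolding s_def by (rule simple_hoare_hoare_prev) simp
    show "\<forall>G\<in>hoare_prev. step_dominates G P a \<longrightarrow> prev_le s G"
      using hoare_prev_ge_linear[OF C _ P] ab
      by (simp add: prev_le_def s_def simple_hoare_singleton row_eval_row_of[OF P])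
  qed
  moreover have "r < s h" using r_a h by (simp add: s_def simple_hoare_singleton row_eval_row_of[OF P])
  ultimately show ?thesis by blast
qed

lemma simple_basis_sub_approx:
  fixes F :: "'a::order prevision"
  assumes C: "continuous_dcpo_on (UNIV :: 'a::order set) (\<le>)" and F: "F \<in> hoare_prev_sub"
    and h: "h \<in> LX" and r: "r < F h"
  shows "\<exists>s\<in>simple_basis_sub. way_below_on hoare_prev_sub prev_le s F \<and> r < s h"
proof -
  note F' = hoare_prev_subD[OF F]
  obtain P a b where P: "finite (P::'a set)" and ab: "\<forall>x\<in>P. 0 \<le> a x \<and> a x < b x"
    and dom: "step_dominates F P b" and r_a: "r < (\<Sum>x\<in>P. ennreal (a x) * h x)"
    using hoare_prev_linear_approx[OF C F' h r] by blast
  have "(\<Sum>x\<in>P. a x) \<le> (\<Sum>x\<in>P. b x)" using ab by (intro sum_mono) (simp add: less_imp_le)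
  also have "\<dots> \<le> 1" by (rule step_dominates_sum_le_one[OF C F' hoare_prev_sub_const_one[OF F] dom])
  finally have mass: "row_mass (row_of P a) \<le> 1"
    using ab by (simp add: row_mass_row_of[OF P] sum_nonneg)
  define s where "s = simple_hoare [row_of P a]"
  have "s \<in> simple_basis_sub"
    using finite_coeffs_row_of[OF P] mass by (auto simp: simple_basis_sub_def s_def row_mass_def)
  moreover have "way_below_on hoare_prev_sub prev_le s F"
  proof (rule way_below_on_if_step_dominates[OF C sup_closed_hoare_prev_sub F _ P ab dom])
    show "s \<in> hoare_prev_sub" unfolding s_def using mass by (intro simple_hoare_hoare_prev_sub) auto
    show "\<forall>G\<in>hoare_prev_sub. step_dominates G P a \<longrightarrow> prev_le s G"
      using hoare_prev_ge_linear[OF C hoare_prev_subD P] ab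
      by (simp add: prev_le_def s_def simple_hoare_singleton row_eval_row_of[OF P])
  qed
  moreover have "r < s h" using r_a h by (simp add: s_def simple_hoare_singleton row_eval_row_of[OF P])
  ultimately show ?thesis by blast
qed

lemma simple_basis_norm_approx:
  fixes F :: "'a::order prevision"
  assumes C: "continuous_dcpo_on (UNIV :: 'a::order set) (\<le>)" and F: "F \<in> hoare_prev_norm"
    and x\<^sub>0: "\<forall>x. x\<^sub>0 \<le> (x::'a)" and h: "h \<in> LX" and r: "r < F h"
  shows "\<exists>s\<in>simple_basis_norm. way_below_on hoare_prev_norm prev_le s F \<and> r < s h"
proof -
  note F' = hoare_prev_normD[OF F]
  obtain P a b where P: "finite (P::'a set)" and ab: "\<forall>x\<in>P. 0 \<le> a x \<and> a x < b x"
    and dom: "step_dominates F P b" and r_a: "r < (\<Sum>x\<in>P. ennreal (a x) * h x)"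
    using hoare_prev_linear_approx[OF C F' h r] by blast
  have a: "\<forall>x\<in>P. 0 \<le> a x" using ab by auto
  have "(\<Sum>x\<in>P. a x) \<le> (\<Sum>x\<in>P. b x)" using ab by (intro sum_mono) (simp add: less_imp_le)
  also have "\<dots> \<le> 1"
    using step_dominates_sum_le_one[OF C F' _ dom] hoare_prev_norm_const[OF F, of 1] by simp
  finally have sum_a: "(\<Sum>x\<in>P. a x) \<le> 1" .
  define row where "row = (ennreal (1 - (\<Sum>x\<in>P. a x)), x\<^sub>0) # row_of P a"
  have mass: "row_mass row = 1"
    using a sum_a by (simp add: row_def row_mass_row_of[OF P] sum_nonneg ennreal_plus[symmetric] del: ennreal_plus)
  have eval: "row_eval row g = ennreal (1 - (\<Sum>x\<in>P. a x)) * g x\<^sub>0 + (\<Sum>x\<in>P. ennreal (a x) * g x)" for g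
    by (simp add: row_def row_eval_row_of[OF P])
  define s where "s = simple_hoare [row]"
  have "finite_coeffs [row]" using finite_coeffs_row_of[OF P] by (simp add: finite_coeffs_def row_def)
  then have "s \<in> simple_basis_norm"
    unfolding simple_basis_norm_def s_def using mass by (auto simp: row_mass_def)
  moreover have "way_below_on hoare_prev_norm prev_le s F"
  proof (rule way_below_on_if_step_dominates[OF C sup_closed_hoare_prev_norm F _ P ab dom])
    show "s \<in> hoare_prev_norm" unfolding s_def using mass by (intro simple_hoare_hoare_prev_norm) auto
    show "\<forall>G\<in>hoare_prev_norm. step_dominates G P a \<longrightarrow> prev_le s G"
      using hoare_prev_norm_ge_linear[OF C _ P a sum_a x\<^sub>0]
      by (simp add: prev_le_def s_def simple_hoare_singleton eval)
  qed
  moreover have "r < s h"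
    using r_a h by (simp add: s_def simple_hoare_singleton eval) (metis add.commute add_increasing2 le_iff_add less_le_trans zero_le)
  ultimately show ?thesis by blast
qed

lemma way_below_on_prev_le_max:
  fixes s1 s2 s3 :: "'a::order prevision"
  assumes s: "way_below_on D prev_le s1 F" "way_below_on D prev_le s2 F"
    and s3: "s3 \<in> D" "\<forall>h\<in>LX. s3 h = max (s1 h) (s2 h)"
  shows "way_below_on D prev_le s3 F"
  unfolding way_below_on_def
proof (intro conjI allI impI)
  show "F \<in> D" using s(1) unfolding way_below_on_def by blast
  fix S u assume Su: "directed_on D prev_le S \<and> is_lub_on D prev_le S u \<and> prev_le F u"
  obtain t1 t2 where t: "t1 \<in> S" "prev_le s1 t1" "t2 \<in> S" "prev_le s2 t2"
    using s Su unfolding way_below_on_def by meson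
  then obtain t3 where t3: "t3 \<in> S" "prev_le t1 t3" "prev_le t2 t3"
    using Su unfolding directed_on_def by blast
  have "prev_le s3 t3"
    unfolding prev_le_def
  proof
    fix h :: "'a \<Rightarrow> ennreal" assume "h \<in> LX"
    then have "s1 h \<le> t3 h" "s2 h \<le> t3 h" using t t3 unfolding prev_le_def by (meson order_trans)+
    then show "s3 h \<le> t3 h" using s3 \<open>h \<in> LX\<close> by simp
  qed
  then show "\<exists>t\<in>S. prev_le s3 t" using t3 by blast
qed (rule s3(1))

lemma basis_on_prev_leI:
  fixes D :: "'a::order prevision set"
  assumes D: "sup_closed D" and B: "B \<subseteq> D"
    and least: "\<forall>F\<in>D. \<exists>z\<in>B. way_below_on D prev_le z F"
    and max: "\<forall>s1\<in>B. \<forall>s2\<in>B. \<exists>s3\<in>B. \<forall>h\<in>LX. s3 h = max (s1 h) (s2 h)"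
    and approx: "\<forall>F\<in>D. \<forall>h\<in>LX. \<forall>r. r < F h \<longrightarrow> (\<exists>s\<in>B. way_below_on D prev_le s F \<and> r < s h)"
  shows "basis_on D prev_le B"
  unfolding basis_on_def
proof (intro conjI ballI)
  fix F assume F: "F \<in> D"
  let ?BF = "{s\<in>B. way_below_on D prev_le s F}"
  show "directed_on D prev_le ?BF"
    unfolding directed_on_def
  proof (intro conjI ballI)
    fix s1 s2 assume s1: "s1 \<in> ?BF" and s2: "s2 \<in> ?BF"
    then obtain s3 where s3: "s3 \<in> B" "\<forall>h\<in>LX. s3 h = max (s1 h) (s2 h)" using max by blast
    have "way_below_on D prev_le s3 F"
      using s1 s2 s3(1) B by (intro way_below_on_prev_le_max[OF _ _ _ s3(2)]) auto
    then show "\<exists>s\<in>?BF. prev_le s1 s \<and> prev_le s2 s"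
      using s3 unfolding prev_le_def by auto
  qed (use B least F in auto)
  have po: "partial_order_on_rel D prev_le" using D partial_order_on_rel_prev_le unfolding sup_closed_def by blast
  show "is_lub_on D prev_le ?BF F"
    unfolding is_lub_on_def
  proof (intro conjI ballI impI)
    show "prev_le s F" if "s \<in> ?BF" for s using way_below_on_imp_le[OF po] that by blast
    fix G assume G: "G \<in> D" "\<forall>s\<in>?BF. prev_le s G"
    show "prev_le F G"
      unfolding prev_le_def
    proof
      fix h :: "'a \<Rightarrow> ennreal" assume h: "h \<in> LX"
      show "F h \<le> G h"
      proof (rule dense_le)
        fix y assume "y < F h"
        then obtain s where "s \<in> ?BF" "y < s h" using approx F h by blast
        then show "y \<le> G h" using G h unfolding prev_le_def by (meson less_imp_le order_trans)
      qed
    qed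
  qed (rule F)
qed (rule B)

lemma simple_hoare_max_closed:
  fixes R :: "(ennreal \<times> 'a::order) list \<Rightarrow> bool"
  defines "B \<equiv> {simple_hoare rows | rows. finite_coeffs rows \<and> (\<forall>row\<in>set rows. R row)}"
  shows "\<forall>s1\<in>B. \<forall>s2\<in>B. \<exists>s3\<in>B. \<forall>h\<in>LX. s3 h = max (s1 h) (s2 h)"
proof (intro ballI)
  fix s1 s2 assume "s1 \<in> B" "s2 \<in> B"
  then obtain rows1 rows2 where rows: "s1 = simple_hoare rows1" "s2 = simple_hoare rows2"
    "finite_coeffs rows1" "finite_coeffs rows2" "\<forall>row\<in>set rows1 \<union> set rows2. R row"
    unfolding B_def by auto
  then have "simple_hoare (rows1 @ rows2) \<in> B"
    unfolding B_def finite_coeffs_def by (intro CollectI exI[of _ "rows1 @ rows2"]) auto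
  moreover have "\<forall>h\<in>LX. simple_hoare (rows1 @ rows2) h = max (s1 h) (s2 h)"
    using rows(3,4) by (simp add: rows(1,2) finite_coeffs_def simple_hoare_append)
  ultimately show "\<exists>s3\<in>B. \<forall>h\<in>LX. s3 h = max (s1 h) (s2 h)" by blast
qed

lemma simple_hoare_zero: "simple_hoare [[]] h = 0"
  by (simp add: simple_hoare_eq)

lemma simple_hoare_point: "simple_hoare [[(1, x)]] = (\<lambda>h. if h \<in> LX then h x else 0)"
  by (simp add: simple_hoare_eq fun_eq_iff)

lemma basis_on_hoare_prev:
  assumes C: "continuous_dcpo_on (UNIV :: 'a::order set) (\<le>)"
  shows "basis_on (hoare_prev :: 'a prevision set) prev_le simple_basis"
proof (rule basis_on_prev_leI[OF sup_closed_hoare_prev])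
  show B: "simple_basis \<subseteq> (hoare_prev :: 'a prevision set)"
    unfolding simple_basis_def finite_coeffs_def using simple_hoare_hoare_prev by blast
  have "simple_hoare [[]] \<in> simple_basis" by (auto simp: simple_basis_def finite_coeffs_def)
  then show "\<forall>F\<in>(hoare_prev :: 'a prevision set). \<exists>z\<in>simple_basis. way_below_on hoare_prev prev_le z F"
    using B by (intro ballI bexI[of _ "simple_hoare [[]]"] way_below_on_least)
      (auto simp: prev_le_def simple_hoare_zero)
  show "\<forall>s1\<in>simple_basis. \<forall>s2\<in>simple_basis. \<exists>s3\<in>simple_basis. \<forall>h\<in>LX. s3 h = max (s1 h) (s2 h)"
    using simple_hoare_max_closed[of "\<lambda>_. True"] by (simp add: simple_basis_def)
  show "\<forall>F\<in>(hoare_prev :: 'a prevision set). \<forall>h\<in>LX. \<forall>r. r < F h \<longrightarrow>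
      (\<exists>s\<in>simple_basis. way_below_on hoare_prev prev_le s F \<and> r < s h)"
    using simple_basis_approx[OF C] by auto
qed

lemma basis_on_hoare_prev_sub:
  assumes C: "continuous_dcpo_on (UNIV :: 'a::order set) (\<le>)"
  shows "basis_on (hoare_prev_sub :: 'a prevision set) prev_le simple_basis_sub"
proof (rule basis_on_prev_leI[OF sup_closed_hoare_prev_sub])
  show B: "simple_basis_sub \<subseteq> (hoare_prev_sub :: 'a prevision set)"
    unfolding simple_basis_sub_def finite_coeffs_def
    using simple_hoare_hoare_prev_sub unfolding row_mass_def by blast
  have "simple_hoare [[]] \<in> simple_basis_sub" by (auto simp: simple_basis_sub_def finite_coeffs_def)
  then show "\<forall>F\<in>(hoare_prev_sub :: 'a prevision set). \<exists>z\<in>simple_basis_sub. way_below_on hoare_prev_sub prev_le z F"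
    using B by (intro ballI bexI[of _ "simple_hoare [[]]"] way_below_on_least)
      (auto simp: prev_le_def simple_hoare_zero)
  show "\<forall>s1\<in>simple_basis_sub. \<forall>s2\<in>simple_basis_sub. \<exists>s3\<in>simple_basis_sub.
      \<forall>h\<in>LX. s3 h = max (s1 h) (s2 h)"
    using simple_hoare_max_closed[of "\<lambda>row. (\<Sum>(a, x)\<leftarrow>row. a) \<le> 1"] by (simp add: simple_basis_sub_def)
  show "\<forall>F\<in>(hoare_prev_sub :: 'a prevision set). \<forall>h\<in>LX. \<forall>r. r < F h \<longrightarrow>
      (\<exists>s\<in>simple_basis_sub. way_below_on hoare_prev_sub prev_le s F \<and> r < s h)"
    using simple_basis_sub_approx[OF C] by auto
qed

lemma basis_on_hoare_prev_norm:
  assumes C: "continuous_dcpo_on (UNIV :: 'a::order set) (\<le>)" and x\<^sub>0: "\<forall>x. x\<^sub>0 \<le> (x::'a)"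
  shows "basis_on (hoare_prev_norm :: 'a prevision set) prev_le simple_basis_norm"
proof (rule basis_on_prev_leI[OF sup_closed_hoare_prev_norm])
  show B: "simple_basis_norm \<subseteq> (hoare_prev_norm :: 'a prevision set)"
    unfolding simple_basis_norm_def finite_coeffs_def
    using simple_hoare_hoare_prev_norm unfolding row_mass_def by blast
  have "simple_hoare [[(1, x\<^sub>0)]] \<in> simple_basis_norm" by (auto simp: simple_basis_norm_def finite_coeffs_def)
  moreover have "way_below_on hoare_prev_norm prev_le (simple_hoare [[(1, x\<^sub>0)]]) F"
    if "F \<in> hoare_prev_norm" for F :: "'a prevision"
    using that B calculation hoare_prev_norm_ge_bot[OF _ x\<^sub>0]
    by (intro way_below_on_least) (auto simp: prev_le_def simple_hoare_point)
  ultimately show "\<forall>F\<in>(hoare_prev_norm :: 'a prevision set). \<exists>z\<in>simple_basis_norm. way_below_on hoare_prev_norm prev_le z F"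
    by blast
  show "\<forall>s1\<in>simple_basis_norm. \<forall>s2\<in>simple_basis_norm. \<exists>s3\<in>simple_basis_norm.
      \<forall>h\<in>LX. s3 h = max (s1 h) (s2 h)"
    using simple_hoare_max_closed[of "\<lambda>row. (\<Sum>(a, x)\<leftarrow>row. a) = 1"] by (simp add: simple_basis_norm_def)
  show "\<forall>F\<in>(hoare_prev_norm :: 'a prevision set). \<forall>h\<in>LX. \<forall>r. r < F h \<longrightarrow>
      (\<exists>s\<in>simple_basis_norm. way_below_on hoare_prev_norm prev_le s F \<and> r < s h)"
    using simple_basis_norm_approx[OF C _ x\<^sub>0] by auto
qed

theorem proposition3p39:
  assumes "continuous_dcpo_on (UNIV :: 'a::order set) (\<le>)"
  shows "continuous_dcpo_on (hoare_prev :: (('a \<Rightarrow> ennreal) \<Rightarrow> ennreal) set) prev_le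
       \<and> basis_on (hoare_prev :: (('a \<Rightarrow> ennreal) \<Rightarrow> ennreal) set) prev_le simple_basis
       \<and> continuous_dcpo_on (hoare_prev_sub :: (('a \<Rightarrow> ennreal) \<Rightarrow> ennreal) set) prev_le
       \<and> basis_on (hoare_prev_sub :: (('a \<Rightarrow> ennreal) \<Rightarrow> ennreal) set) prev_le simple_basis_sub
       \<and> (\<forall>bot :: 'a. (\<forall>x. bot \<le> x) \<longrightarrow>
            continuous_dcpo_on (hoare_prev_norm :: (('a \<Rightarrow> ennreal) \<Rightarrow> ennreal) set) prev_le
          \<and> basis_on (hoare_prev_norm :: (('a \<Rightarrow> ennreal) \<Rightarrow> ennreal) set) prev_le simple_basis_norm
          \<and> (\<lambda>h. if h \<in> LX then h bot else 0) \<in> (hoare_prev_norm :: (('a \<Rightarrow> ennreal) \<Rightarrow> ennreal) set)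
          \<and> (\<forall>F \<in> (hoare_prev_norm :: (('a \<Rightarrow> ennreal) \<Rightarrow> ennreal) set).
                prev_le (\<lambda>h. if h \<in> LX then h bot else 0) F))"
proof -
  let ?N = "hoare_prev_norm :: 'a prevision set"
  note B = basis_on_hoare_prev[OF assms] and B_sub = basis_on_hoare_prev_sub[OF assms]
  have pointed: "continuous_dcpo_on ?N prev_le \<and> basis_on ?N prev_le simple_basis_norm
      \<and> (\<lambda>h. if h \<in> LX then h x\<^sub>0 else 0) \<in> ?N
      \<and> (\<forall>F \<in> ?N. prev_le (\<lambda>h. if h \<in> LX then h x\<^sub>0 else 0) F)"
    if x\<^sub>0: "\<forall>x. x\<^sub>0 \<le> x" for x\<^sub>0
  proof -
    note B_norm = basis_on_hoare_prev_norm[OF assms x\<^sub>0]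
    have "simple_hoare [[(1, x\<^sub>0)]] \<in> ?N" by (rule simple_hoare_hoare_prev_norm) auto
    then show ?thesis
      using continuous_dcpo_onI[OF dcpo_on_sup_closed[OF sup_closed_hoare_prev_norm] B_norm]
        B_norm hoare_prev_norm_ge_bot[OF _ x\<^sub>0]
      by (auto simp: simple_hoare_point prev_le_def)
  qed
  show ?thesis
    using continuous_dcpo_onI[OF dcpo_on_sup_closed[OF sup_closed_hoare_prev] B]
      continuous_dcpo_onI[OF dcpo_on_sup_closed[OF sup_closed_hoare_prev_sub] B_sub]
      B B_sub pointed by blast
qed

end
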